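(* Let $k\ne -2$ and let $g\in U(\hat{\mathfrak n}_-)$ be homogeneous of degree $n$ for the grading $\deg a_1(-i_1)\cdots a_s(-i_s)=i_1+\cdots+i_s$. Then $$\epsilon(g)\equiv(-1)^n\big(F([g.\mathbf 1])\big)^{T}\mod U(\mathfrak g)\mathfrak n_-.$$
   Context: Conventions for $\mathfrak g$ and $\hat{\mathfrak g}$: - $\mathfrak g=sl(2,\mathbb C)$ has basis $e,f,h$ with the usual relations, $\mathfrak n_-=\mathbb C f$, $\mathfrak n_+=\mathbb C e$. - $\hat{\mathfrak g}=\mathfrak g\otimes\mathbb C[t,t^{-1}]\oplus\mathbb Cc$ with $x(n)=x\otimes t^n$. - $\hat{\mathfrak n}_-=\mathfrak n_-\otimes1\oplus\mathfrak g\otimes t^{-1}\mathbb C[t^{-1}]$. - $\epsilon:U(\hat{\mathfrak n}_-)\to U(\mathfrak g)$ is the algebra homomorphism with $a(-i)\mapsto a$ for $i\ge0$. The module and the VOA: - $M(k,0)=U(\hat{\mathfrak g})\otimes_{U(\mathfrak g\otimes\mathbb C[t]\oplus\mathbb Cc)}\mathbb C$, with $\mathfrak g\otimes\mathbb C[t]$ acting trivially and $c$ acting as $k$. - $M(k,0)$ is a vertex operator algebra with vacuum $\mathbf 1=1\otimes1$. Zhu's algebra. For a VOA $V$, define on homogeneous $a$ the product $a*b=\mathrm{Res}_z\frac{(1+z)^{\mathrm{wt}\,a}}{z}Y(a,z)b$. Let $O(V)$ be the span of the elements $\mathrm{Res}_z\frac{(1+z)^{\mathrm{wt}\,a}}{z^2}Y(a,z)b$.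 Then $A(V)=V/O(V)$ is an associative algebra, and $[v]$ denotes the class of $v$. $F:A(M(k,0))\to U(\mathfrak g)$ is the algebra isomorphism given by $F[a_1(-i_1-1)\cdots a_n(-i_n-1)\mathbf 1]=(-1)^{i_1+\cdots+i_n}a_n\cdots a_1$ for $a_r\in\mathfrak g$, $i_r\in\mathbb Z_{\ge0}$. $x\mapsto x^T$ denotes the principal anti-automorphism of $U(\mathfrak g)$, i.e. the anti-automorphism with $x^T=-x$ for $x\in\mathfrak g$. *)

theory Defs
  imports Complex_Main
begin

type_synonym 'a fsum = "(complex \<times> 'a list) list"

definition coef :: "'a fsum \<Rightarrow> 'a list \<Rightarrow> complex" where
  "coef p w = sum_list (map (\<lambda>(c, v). if v = w then c else 0) p)"

definition fs_add :: "'a fsum \<Rightarrow> 'a fsum \<Rightarrow> 'a fsum" where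
  "fs_add p q = p @ q"

definition fs_smul :: "complex \<Rightarrow> 'a fsum \<Rightarrow> 'a fsum" where
  "fs_smul a p = map (\<lambda>(c, v). (a * c, v)) p"

definition fs_diff :: "'a fsum \<Rightarrow> 'a fsum \<Rightarrow> 'a fsum" where
  "fs_diff p q = fs_add p (fs_smul (-1) q)"

definition fs_mul :: "'a fsum \<Rightarrow> 'a fsum \<Rightarrow> 'a fsum" where
  "fs_mul p q = concat (map (\<lambda>(c, v). map (\<lambda>(d, w). (c * d, v @ w)) q) p)"

definition fs_gen :: "'a \<Rightarrow> 'a fsum" where
  "fs_gen x = [(1, [x])]"

definition fs_one :: "'a fsum" where
  "fs_one = [(1, [])]"

definition fs_lin :: "(complex \<times> 'a) list \<Rightarrow> 'a fsum" where
  "fs_lin xs = map (\<lambda>(c, x). (c, [x])) xs"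

inductive_set ideal_mod :: "'a fsum set \<Rightarrow> 'a fsum set \<Rightarrow> 'a fsum set"
  for T L :: "'a fsum set" where
  zero: "(\<forall>w. coef p w = 0) \<Longrightarrow> p \<in> ideal_mod T L"
| coef_eq: "q \<in> ideal_mod T L \<Longrightarrow> coef p = coef q \<Longrightarrow> p \<in> ideal_mod T L"
| add: "p \<in> ideal_mod T L \<Longrightarrow> q \<in> ideal_mod T L \<Longrightarrow> fs_add p q \<in> ideal_mod T L"
| smul: "p \<in> ideal_mod T L \<Longrightarrow> fs_smul a p \<in> ideal_mod T L"
| two_sided: "t \<in> T \<Longrightarrow> fs_mul (fs_mul l t) r \<in> ideal_mod T L"
| left: "x \<in> L \<Longrightarrow> fs_mul l x \<in> ideal_mod T L"

definition cong_mod :: "'a fsum set \<Rightarrow> 'a fsum set \<Rightarrow> 'a fsum \<Rightarrow> 'a fsum \<Rightarrow> bool" where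
  "cong_mod T L p q \<longleftrightarrow> fs_diff p q \<in> ideal_mod T L"

datatype sl2b = sE | sF | sH

fun sl2_bracket :: "sl2b \<Rightarrow> sl2b \<Rightarrow> (complex \<times> sl2b) list" where
  "sl2_bracket sE sF = [(1, sH)]"
| "sl2_bracket sF sE = [(-1, sH)]"
| "sl2_bracket sH sE = [(2, sE)]"
| "sl2_bracket sE sH = [(-2, sE)]"
| "sl2_bracket sH sF = [(-2, sF)]"
| "sl2_bracket sF sH = [(2, sF)]"
| "sl2_bracket _ _ = []"

text \<open>Normalized invariant form (x|y) = tr(xy).\<close>
fun sl2_form :: "sl2b \<Rightarrow> sl2b \<Rightarrow> complex" where
  "sl2_form sE sF = 1"
| "sl2_form sF sE = 1"
| "sl2_form sH sH = 2"
| "sl2_form _ _ = 0"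

definition Ug_rels :: "sl2b fsum set" where
  "Ug_rels = {fs_diff (fs_diff [(1, [x, y])] [(1, [y, x])]) (fs_lin (sl2_bracket x y)) | x y. True}"

definition Ug_eq :: "sl2b fsum \<Rightarrow> sl2b fsum \<Rightarrow> bool" where
  "Ug_eq p q \<longleftrightarrow> cong_mod Ug_rels {} p q"

text \<open>Congruence in U(g) modulo the left ideal U(g) n_-, n_- = C f.\<close>
definition Ug_cong_nminus :: "sl2b fsum \<Rightarrow> sl2b fsum \<Rightarrow> bool" where
  "Ug_cong_nminus p q \<longleftrightarrow> cong_mod Ug_rels {fs_gen sF} p q"

text \<open>Principal anti-automorphism x \<mapsto> x^T (x^T = -x on g).\<close>
definition ug_transpose :: "sl2b fsum \<Rightarrow> sl2b fsum" where
  "ug_transpose p = map (\<lambda>(c, w). ((-1) ^ length w * c, rev w)) p"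

datatype aff = Mode sl2b int | Cen

fun aff_base :: "aff \<Rightarrow> sl2b" where
  "aff_base (Mode a m) = a"
| "aff_base Cen = sE"

fun aff_mode :: "aff \<Rightarrow> int" where
  "aff_mode (Mode a m) = m"
| "aff_mode Cen = 0"

definition ghat_rels :: "aff fsum set" where
  "ghat_rels =
     {fs_diff (fs_diff (fs_diff [(1, [Mode a m, Mode b l])] [(1, [Mode b l, Mode a m])])
          (map (\<lambda>(c, x). (c, [Mode x (m + l)])) (sl2_bracket a b)))
        [((if m + l = 0 then of_int m * sl2_form a b else 0), [Cen])] | a b m l. True}
   \<union> {fs_diff [(1, [Cen, x])] [(1, [x, Cen])] | x. True}"

text \<open>M(k,0) = U(ghat) / (U(ghat)(g \<otimes> C[t]) + U(ghat)(c - k)).\<close>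
definition M_left :: "complex \<Rightarrow> aff fsum set" where
  "M_left k = {fs_gen (Mode a m) | a m. m \<ge> 0} \<union> {[(1, [Cen]), (- k, [])]}"

definition M_eq :: "complex \<Rightarrow> aff fsum \<Rightarrow> aff fsum \<Rightarrow> bool" where
  "M_eq k v w \<longleftrightarrow> cong_mod ghat_rels (M_left k) v w"

definition neg_word :: "aff list \<Rightarrow> bool" where
  "neg_word w \<longleftrightarrow> (\<forall>x\<in>set w. \<exists>a m. x = Mode a m \<and> m \<le> -1)"

text \<open>F on monomials: a_1(-i_1-1)...a_n(-i_n-1)1 \<mapsto> (-1)^(i_1+...+i_n) a_n...a_1, extended linearly.\<close>
definition F_mono :: "aff fsum \<Rightarrow> sl2b fsum" where
  "F_mono p = map (\<lambda>(c, w). ((-1) ^ (\<Sum>x\<leftarrow>w. nat (- aff_mode x - 1)) * c, rev (map aff_base w))) p"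

text \<open>F_of_class k v u: u represents F([v]) for the state v (represented by an element of U(ghat)
  acting on the vacuum) of M(k,0).\<close>
definition F_of_class :: "complex \<Rightarrow> aff fsum \<Rightarrow> sl2b fsum \<Rightarrow> bool" where
  "F_of_class k v u \<longleftrightarrow>
     (\<exists>p. (\<forall>(c, w)\<in>set p. neg_word w) \<and> M_eq k v p \<and> Ug_eq u (F_mono p))"

text \<open>Generator (a, i) stands for a(-i); nhat_- is spanned by f(0) and a(-i), i \<ge> 1.\<close>
definition nminus_gen :: "sl2b \<times> nat \<Rightarrow> bool" where
  "nminus_gen x \<longleftrightarrow> snd x \<ge> 1 \<or> fst x = sF"

definition ndeg :: "(sl2b \<times> nat) list \<Rightarrow> nat" where
  "ndeg w = (\<Sum>x\<leftarrow>w. snd x)"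

definition eps :: "(sl2b \<times> nat) fsum \<Rightarrow> sl2b fsum" where
  "eps g = map (\<lambda>(c, w). (c, map fst w)) g"

text \<open>Inclusion U(nhat_-) \<rightarrow> U(ghat); applied to the vacuum this gives g.1.\<close>
definition emb :: "(sl2b \<times> nat) fsum \<Rightarrow> aff fsum" where
  "emb g = map (\<lambda>(c, w). (c, map (\<lambda>(a, i). Mode a (- int i)) w)) g"

end

theory Submission
  imports Defs
begin

(*
  M(k,0) is realised concretely as the algebra V generated by the negative modes b(-i-1) modulo
  their commutation relations [a(-i-1), b(-j-1)] = [a,b](-i-j-2), the vacuum being 1. Negative
  modes act on V by left multiplication, a(m) with m >= 0 by commuting it through a word down to
  the vacuum, which it kills, and c by k. The Jacobi identity and the invariance of the form make
  this a representation of the affine algebra annihilating the vacuum, so vectors that are equal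
  in M(k,0) have equal images in V.

  The assignment b(-i-1) |-> (-1)^(i+1) b is an algebra homomorphism from V to U(g). On a monomial
  in negative modes it is F followed by the transpose. On g.1 with g in U(nhat_-), a factor a(-i)
  with i >= 1 contributes (-1)^i a on the left, while f(0) acts as the derivation ad f, which is
  left multiplication by f modulo U(g) f. Hence the two images of g.1 agree up to (-1)^n.
*)

lemma coef_Nil[simp]: "coef [] w = 0" by (simp add: coef_def)
lemma coef_Cons[simp]: "coef ((c,v)#p) w = (if v = w then c else 0) + coef p w"
  by (simp add: coef_def)
lemma coef_append[simp]: "coef (p @ q) w = coef p w + coef q w"
  by (simp add: coef_def)
lemma coef_smul[simp]: "coef (fs_smul a p) w = a * coef p w"
  by (induction p) (auto simp: coef_def fs_smul_def algebra_simps)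
lemma coef_add[simp]: "coef (fs_add p q) w = coef p w + coef q w"
  by (simp add: fs_add_def)
lemma coef_diff[simp]: "coef (fs_diff p q) w = coef p w - coef q w"
  by (simp add: fs_diff_def)
lemma fs_smul_Nil[simp]: "fs_smul a [] = []" by (simp add: fs_smul_def)
lemma fs_smul_Cons[simp]: "fs_smul a ((c,w)#p) = (a*c,w) # fs_smul a p" by (simp add: fs_smul_def)
lemma fs_smul_append[simp]:
  "fs_smul a (p @ q) = fs_smul a p @ fs_smul a q"
  by (simp add: fs_smul_def)
lemma fs_smul_smul[simp]:
  "fs_smul a (fs_smul b p) = fs_smul (a*b) p"
  by (induction p) (auto simp: fs_smul_def)
lemma fs_smul_one[simp]: "fs_smul 1 p = p" by (induction p) (auto simp: fs_smul_def)

definition fs_extend :: "('a list \<Rightarrow> 'b fsum) \<Rightarrow> 'a fsum \<Rightarrow> 'b fsum" where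
  "fs_extend f p = concat (map (\<lambda>(c,w). fs_smul c (f w)) p)"
lemma fs_extend_Nil[simp]: "fs_extend f [] = []" by (simp add: fs_extend_def)
lemma fs_extend_Cons[simp]:
  "fs_extend f ((c,w)#p) = fs_smul c (f w) @ fs_extend f p"
  by (simp add: fs_extend_def)
lemma fs_extend_append[simp]:
  "fs_extend f (p @ q) = fs_extend f p @ fs_extend f q"
  by (simp add: fs_extend_def)
lemma coef_fs_extend: "coef (fs_extend f p) u = sum_list (map (\<lambda>(c,w). c * coef (f w) u) p)"
  by (induction p) auto

lemma sum_list_eq_sum_coef:
  assumes "finite S" "snd ` set p \<subseteq> S"
  shows "sum_list (map (\<lambda>(c,w). c * h w) p) = (\<Sum>w\<in>S. coef p w * h w)"
  using assms(2)
proof (induction p)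
  case Nil then show ?case by simp
next
  case (Cons x p)
  obtain c v where x: "x = (c,v)" by force
  have vS: "v \<in> S" using Cons.prems x by auto
  have e: "\<And>w. coef (x#p) w * h w = (if v = w then c * h w else 0) + coef p w * h w"
    by (simp add: x algebra_simps)
  have "(\<Sum>w\<in>S. coef (x#p) w * h w) = (\<Sum>w\<in>S. (if v = w then c * h w else 0))
    + (\<Sum>w\<in>S. coef p w * h w)"
    unfolding e by (rule sum.distrib)
  also have "(\<Sum>w\<in>S. (if v = w then c * h w else 0)) = c * h v"
    using vS assms(1) by (simp add: sum.delta)
  finally show ?case using Cons by (simp add: x)
qed

lemma sum_list_coef_cong:
  assumes "coef p = coef q"
  shows "sum_list (map (\<lambda>(c,w). c * h w) p) = sum_list (map (\<lambda>(c,w). c * h w) q)"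
proof -
  let ?S = "snd ` set p \<union> snd ` set q"
  have "sum_list (map (\<lambda>(c,w). c * h w) p) = (\<Sum>w\<in>?S. coef p w * h w)"
    by (rule sum_list_eq_sum_coef) auto
  also have "\<dots> = (\<Sum>w\<in>?S. coef q w * h w)" using assms by (simp only:)
  also have "\<dots> = sum_list (map (\<lambda>(c,w). c * h w) q)"
    by (rule sum_list_eq_sum_coef[symmetric]) auto
  finally show ?thesis .
qed

lemma fs_extend_coef_cong:
  assumes "coef p = coef q"
  shows "coef (fs_extend f p) = coef (fs_extend f q)"
proof (rule ext)
  fix u
  from assms show "coef (fs_extend f p) u = coef (fs_extend f q) u" unfolding coef_fs_extend
    by (rule sum_list_coef_cong)
qed

lemma fs_extend_cong:
  "(\<And>c w. (c,w) \<in> set p \<Longrightarrow> coef (f w) = coef (g w))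
      \<Longrightarrow> coef (fs_extend f p) = coef (fs_extend g p)"
  apply (rule ext)
  apply (simp only: coef_fs_extend)
  apply (rule arg_cong[where f=sum_list])
  apply (rule map_cong)
  by auto

lemma fs_extend_smul: "coef (fs_extend f (fs_smul a p)) = coef (fs_smul a (fs_extend f p))"
proof (induction p)
  case Nil then show ?case by simp
next
  case (Cons x p) then show ?case by (cases x) (simp add: fun_eq_iff algebra_simps)
qed

lemma coef_fs_extend_smul[simp]: "coef (fs_extend f (fs_smul a p)) u = a * coef (fs_extend f p) u"
  using fs_extend_smul[of f a p] by (simp add: fun_eq_iff)

lemma fs_extend_fs_extend:
  "coef (fs_extend f (fs_extend g p)) = coef (fs_extend (\<lambda>w. fs_extend f (g w)) p)"
proof (induction p)
  case Nil then show ?case by simp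
next
  case (Cons x p)
  then show ?case by (cases x) (simp add: fun_eq_iff fs_extend_smul[unfolded fun_eq_iff])
qed

lemma fs_extend_unit: "coef (fs_extend (\<lambda>w. [(1,w)]) p) = coef p"
  by (rule ext, induction p) auto

definition fs_linear :: "('a fsum \<Rightarrow> 'b fsum) \<Rightarrow> bool" where
  "fs_linear Q \<longleftrightarrow> (\<forall>p. coef (Q p) = coef (fs_extend (\<lambda>w. Q [(1,w)]) p))"

lemma fs_linearD:
  "fs_linear Q \<Longrightarrow> coef (Q p) = coef (fs_extend (\<lambda>w. Q [(1,w)]) p)"
  unfolding fs_linear_def by blast

lemma fs_linear_coef_cong: assumes "fs_linear Q" "coef p = coef q" shows "coef (Q p) = coef (Q q)"
proof -
  have "coef (Q p) = coef (fs_extend (\<lambda>w. Q [(1,w)]) p)" by (rule fs_linearD[OF assms(1)])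
  also have "\<dots> = coef (fs_extend (\<lambda>w. Q [(1,w)]) q)"
    by (rule fs_extend_coef_cong[OF assms(2)])
  also have "\<dots> = coef (Q q)" by (rule fs_linearD[OF assms(1), symmetric])
  finally show ?thesis .
qed

lemma fs_linear_eq_on:
  assumes "fs_linear QA" "fs_linear QB"
    and "\<And>c w. (c,w) \<in> set p \<Longrightarrow> coef (QA [(1,w)]) = coef (QB [(1,w)])"
  shows "coef (QA p) = coef (QB p)"
proof -
  have "coef (QA p) = coef (fs_extend (\<lambda>w. QA [(1,w)]) p)" by (rule fs_linearD[OF assms(1)])
  also have "\<dots> = coef (fs_extend (\<lambda>w. QB [(1,w)]) p)"
    by (rule fs_extend_cong) (rule assms(3))
  also have "\<dots> = coef (QB p)" by (rule fs_linearD[OF assms(2), symmetric])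
  finally show ?thesis .
qed

lemma fs_linear_eq:
  assumes "fs_linear QA" "fs_linear QB" "\<And>w. coef (QA [(1,w)]) = coef (QB [(1,w)])"
  shows "coef (QA p) = coef (QB p)"
  using assms(1,2) by (rule fs_linear_eq_on) (rule assms(3))

lemma fs_linear_extend: "fs_linear (fs_extend f)"
  unfolding fs_linear_def
proof
  fix p show "coef (fs_extend f p) = coef (fs_extend (\<lambda>w. fs_extend f [(1, w)]) p)"
    by (rule fs_extend_cong) (simp add: fun_eq_iff)
qed

lemma fs_linear_id: "fs_linear (\<lambda>p. p)"
  unfolding fs_linear_def by (simp add: fs_extend_unit)

lemma fs_linear_append:
  assumes "fs_linear QA" "fs_linear QB"
  shows "fs_linear (\<lambda>p. QA p @ QB p)"
  unfolding fs_linear_def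
proof
  fix p
  show "coef (QA p @ QB p) = coef (fs_extend (\<lambda>w. QA [(1,w)] @ QB [(1,w)]) p)"
  proof (induction p)
    case Nil
    then show ?case using fs_linearD[OF assms(1), of "[]"] fs_linearD[OF assms(2), of "[]"]
      by (simp add: fun_eq_iff)
  next
    case (Cons x p)
    obtain c w where x: "x = (c,w)" by force
    have e1: "coef (QA (x#p)) = (\<lambda>u. c * coef (QA [(1,w)]) u + coef (QA p) u)"
      using fs_linearD[OF assms(1), of "x#p"] fs_linearD[OF assms(1), of p] by (simp add: x fun_eq_iff)
    have e2: "coef (QB (x#p)) = (\<lambda>u. c * coef (QB [(1,w)]) u + coef (QB p) u)"
      using fs_linearD[OF assms(2), of "x#p"] fs_linearD[OF assms(2), of p] by (simp add: x fun_eq_iff)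
    show ?case using Cons e1 e2 by (simp add: x fun_eq_iff algebra_simps)
  qed
qed

lemma fs_linear_smul: assumes "fs_linear Q" shows "fs_linear (\<lambda>p. fs_smul a (Q p))"
  unfolding fs_linear_def
proof
  fix p
  have "coef (fs_smul a (Q p)) = (\<lambda>u. a * coef (fs_extend (\<lambda>w. Q [(1,w)]) p) u)"
    using fs_linearD[OF assms, of p] by (simp add: fun_eq_iff)
  also have "\<dots> = coef (fs_smul a (fs_extend (\<lambda>w. Q [(1,w)]) p))" by (simp add: fun_eq_iff)
  also have "\<dots> = coef (fs_extend (\<lambda>w. fs_smul a (Q [(1,w)])) p)"
    by (induction p) (auto simp: fun_eq_iff algebra_simps)
  finally show "coef (fs_smul a (Q p)) = coef (fs_extend (\<lambda>w. fs_smul a (Q [(1, w)])) p)" .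
qed

lemma fs_linear_Nil: "fs_linear (\<lambda>p. [])"
  unfolding fs_linear_def
proof
  fix p :: "'a fsum" show "coef [] = coef (fs_extend (\<lambda>w. [] :: 'b fsum) p)"
    by (induction p) auto
qed

lemma fs_linear_apply_extend:
  assumes l: "fs_linear Q"
  shows "coef (Q (fs_extend g p)) = coef (fs_extend (\<lambda>w. Q (g w)) p)"
proof -
  have "coef (Q (fs_extend g p)) = coef (fs_extend (\<lambda>w. Q [(1,w)]) (fs_extend g p))"
    by (rule fs_linearD[OF l])
  also have "\<dots> = coef (fs_extend (\<lambda>w. fs_extend (\<lambda>w. Q [(1,w)]) (g w)) p)"
    by (rule fs_extend_fs_extend)
  also have "\<dots> = coef (fs_extend (\<lambda>w. Q (g w)) p)"
    by (rule fs_extend_cong) (rule fs_linearD[OF l, symmetric])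
  finally show ?thesis .
qed

lemma fs_linear_comp:
  assumes l1: "fs_linear QA" and l2: "fs_linear QB"
  shows "fs_linear (\<lambda>p. QA (QB p))"
  unfolding fs_linear_def
proof
  fix p
  have "coef (QA (QB p)) = coef (QA (fs_extend (\<lambda>w. QB [(1,w)]) p))"
    by (rule fs_linear_coef_cong[OF l1 fs_linearD[OF l2]])
  also have "\<dots> = coef (fs_extend (\<lambda>w. QA (QB [(1,w)])) p)"
    by (rule fs_linear_apply_extend[OF l1])
  finally show "coef (QA (QB p)) = coef (fs_extend (\<lambda>w. QA (QB [(1, w)])) p)" .
qed

lemma fs_linear_apply_append: assumes "fs_linear Q" shows "coef (Q (p @ q)) = coef (Q p @ Q q)"
  using fs_linearD[OF assms, of "p@q"] fs_linearD[OF assms, of p] fs_linearD[OF assms, of q]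
    by (simp add: fun_eq_iff)

lemma fs_linear_apply_smul:
  assumes "fs_linear Q"
  shows "coef (Q (fs_smul a p)) = coef (fs_smul a (Q p))"
  using fs_linearD[OF assms, of "fs_smul a p"] fs_linearD[OF assms, of p]
    fs_extend_smul[of "\<lambda>w. Q [(1,w)]" a p]
  by (simp add: fun_eq_iff)

lemma fs_linear_apply_Nil: assumes "fs_linear Q" shows "coef (Q []) = coef []"
  using fs_linearD[OF assms, of "[]"] by simp
lemma fs_linear_apply_zero: assumes "fs_linear Q" "coef p = coef []" shows "coef (Q p) = coef []"
  using fs_linear_coef_cong[OF assms] fs_linear_apply_Nil[OF assms(1)] by simp

definition word_mul :: "'a list \<Rightarrow> 'a fsum \<Rightarrow> 'a fsum" where
  "word_mul v q = map (\<lambda>(d,w). (d, v@w)) q"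
lemma word_mul_Nil[simp]: "word_mul v [] = []" by (simp add: word_mul_def)
lemma word_mul_Cons[simp]:
  "word_mul v ((d,w)#q) = (d, v@w) # word_mul v q"
  by (simp add: word_mul_def)
lemma word_mul_append[simp]:
  "word_mul v (p@q) = word_mul v p @ word_mul v q"
  by (simp add: word_mul_def)
lemma word_mul_Nil_word[simp]: "word_mul [] P = P" by (induction P) auto
lemma word_mul_word_mul:
  "word_mul u (word_mul v q) = word_mul (u@v) q"
  by (induction q) (auto simp: word_mul_def)
lemma word_mul_singleton_word_mul[simp]:
  "word_mul [x] (word_mul v q) = word_mul (x#v) q"
  by (simp add: word_mul_word_mul)
lemma word_mul_smul:
  "word_mul u (fs_smul c q) = fs_smul c (word_mul u q)"
  by (induction q) (auto simp: word_mul_def)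
lemma coef_word_mul_smul[simp]: "coef (word_mul v (fs_smul c p)) u = c * coef (word_mul v p) u"
  by (simp add: word_mul_smul)

lemma fs_linear_word_mul: "fs_linear (word_mul v)"
  unfolding fs_linear_def
proof
  fix q show "coef (word_mul v q) = coef (fs_extend (\<lambda>w. word_mul v [(1, w)]) q)"
    by (induction q) (auto simp: fun_eq_iff)
qed

lemma coef_word_mul_cong:
  "coef P = coef Q \<Longrightarrow> coef (word_mul v P) u = coef (word_mul v Q) u"
  using fs_linear_coef_cong[OF fs_linear_word_mul] by metis
lemma fs_extend_word_mul: "fs_extend g (word_mul u Q) = fs_extend (\<lambda>w. g (u@w)) Q"
  by (induction Q) auto

lemma fs_mul_eq_extend: "fs_mul p q = fs_extend (\<lambda>v. word_mul v q) p"
  unfolding fs_mul_def fs_extend_def word_mul_def fs_smul_def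
  by (rule arg_cong[where f=concat]) (auto simp: case_prod_beta)

lemma fs_mul_Nil[simp]: "fs_mul [] q = []" by (simp add: fs_mul_def)
lemma fs_mul_Cons[simp]: "fs_mul ((c,v)#p) q = fs_smul c (word_mul v q) @ fs_mul p q"
  by (simp add: fs_mul_eq_extend)
lemma fs_mul_append1[simp]: "fs_mul (p1 @ p2) q = fs_mul p1 q @ fs_mul p2 q"
  by (simp add: fs_mul_eq_extend)

lemma fs_linear_fs_mul_right: "fs_linear (\<lambda>q. fs_mul p q)"
proof (induction p)
  case Nil then show ?case by (simp add: fs_linear_Nil)
next
  case (Cons x p)
  obtain c v where x: "x = (c,v)" by force
  show ?case unfolding x fs_mul_Cons
    by (rule fs_linear_append[OF fs_linear_smul[OF fs_linear_word_mul] Cons])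
qed

lemma fs_linear_fs_mul_left: "fs_linear (\<lambda>p. fs_mul p q)"
  unfolding fs_mul_eq_extend by (rule fs_linear_extend)
lemma fs_mul_cong1: "coef p = coef p' \<Longrightarrow> coef (fs_mul p q) = coef (fs_mul p' q)"
  by (rule fs_linear_coef_cong[OF fs_linear_fs_mul_left])
lemma fs_mul_cong2: "coef q = coef q' \<Longrightarrow> coef (fs_mul p q) = coef (fs_mul p q')"
  by (rule fs_linear_coef_cong[OF fs_linear_fs_mul_right])
lemma word_mul_fs_mul: "word_mul u (fs_mul q r) = fs_mul (word_mul u q) r"
  by (induction q) (auto simp: word_mul_smul word_mul_word_mul)
lemma fs_mul_smul1: "fs_mul (fs_smul c q) r = fs_smul c (fs_mul q r)"
  by (induction q) (auto simp: word_mul_smul)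
lemma fs_mul_assoc: "fs_mul (fs_mul p q) r = fs_mul p (fs_mul q r)"
  by (induction p) (auto simp: fs_mul_smul1 word_mul_fs_mul)
lemma fs_mul_smul2: "coef (fs_mul p (fs_smul c q)) = coef (fs_smul c (fs_mul p q))"
  by (rule fs_linear_apply_smul[OF fs_linear_fs_mul_right])
lemma fs_mul_one1: "coef (fs_mul [(1,[])] q) = coef q"
  by (induction q) (auto simp: fun_eq_iff)
lemma coef_word_mul_eq_fs_mul: "coef (word_mul v P) = coef (fs_mul [(1,v)] P)"
  by (induction P) (auto simp: fun_eq_iff)

lemma ideal_mod_zero_coef: "coef p = coef [] \<Longrightarrow> p \<in> ideal_mod T L"
  by (rule ideal_mod.zero) (simp add: fun_eq_iff)
lemma ideal_mod_Nil[simp]: "[] \<in> ideal_mod T L"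
  by (rule ideal_mod_zero_coef) simp
lemma ideal_mod_append:
  "p \<in> ideal_mod T L \<Longrightarrow> q \<in> ideal_mod T L
      \<Longrightarrow> p @ q \<in> ideal_mod T L"
  using ideal_mod.add[of p T L q] by (simp add: fs_add_def)

lemma ideal_mod_extend:
  "(\<And>c w. (c,w) \<in> set p \<Longrightarrow> f w \<in> ideal_mod T L)
      \<Longrightarrow> fs_extend f p \<in> ideal_mod T L"
proof (induction p)
  case Nil then show ?case by simp
next
  case (Cons x p) then show ?case by (cases x) (simp, intro ideal_mod_append ideal_mod.smul, auto)
qed

lemma ideal_mod_linear_image:
  assumes "p \<in> ideal_mod T L"
    and Q: "fs_linear Q"
    and two_sided: "\<And>l t r. t \<in> T \<Longrightarrow> Q (fs_mul (fs_mul l t) r) \<in> ideal_mod T' L'"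
    and left: "\<And>l x. x \<in> L \<Longrightarrow> Q (fs_mul l x) \<in> ideal_mod T' L'"
  shows "Q p \<in> ideal_mod T' L'"
  using assms(1)
proof (induction p rule: ideal_mod.induct)
  case (zero p)
  then have "coef p = coef []" by (simp add: fun_eq_iff)
  then show ?case by (intro ideal_mod_zero_coef fs_linear_apply_zero[OF Q])
next
  case (coef_eq q p)
  show ?case by (rule ideal_mod.coef_eq[OF coef_eq.IH]) (rule fs_linear_coef_cong[OF Q coef_eq.hyps(2)])
next
  case (add p q)
  show ?case
    by (rule ideal_mod.coef_eq[OF ideal_mod_append[OF add.IH]])
      (simp add: fs_add_def fs_linear_apply_append[OF Q])
next
  case (smul p a)
  show ?case by (rule ideal_mod.coef_eq[OF ideal_mod.smul[OF smul.IH]])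
    (rule fs_linear_apply_smul[OF Q])
qed (use two_sided left in auto)

lemma ideal_mod_mono:
  "p \<in> ideal_mod T L \<Longrightarrow> T \<subseteq> T' \<Longrightarrow> L \<subseteq> L' \<Longrightarrow> p \<in> ideal_mod T' L'"
  by (erule ideal_mod_linear_image[OF _ fs_linear_id]) (auto intro: ideal_mod.two_sided ideal_mod.left)

lemma ideal_mod_mul_left: "p \<in> ideal_mod T L \<Longrightarrow> fs_mul l p \<in> ideal_mod T L"
proof (erule ideal_mod_linear_image[OF _ fs_linear_fs_mul_right])
  fix l' t r assume "t \<in> T"
  then show "fs_mul l (fs_mul (fs_mul l' t) r) \<in> ideal_mod T L" by (metis ideal_mod.two_sided fs_mul_assoc)
next
  fix l' x assume "x \<in> L"
  then show "fs_mul l (fs_mul l' x) \<in> ideal_mod T L" by (metis ideal_mod.left fs_mul_assoc)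
qed

lemma ideal_mod_word_mul: "P \<in> ideal_mod T L \<Longrightarrow> word_mul v P \<in> ideal_mod T L"
  by (rule ideal_mod.coef_eq[OF ideal_mod_mul_left[of P T L "[(1,v)]"]])
    (assumption, rule coef_word_mul_eq_fs_mul)

lemma cong_mod_refl: "cong_mod T L p p"
  unfolding cong_mod_def by (rule ideal_mod_zero_coef) (simp add: fun_eq_iff)
lemma cong_mod_coefI: "coef p = coef q \<Longrightarrow> cong_mod T L p q"
  unfolding cong_mod_def by (rule ideal_mod_zero_coef) (simp add: fun_eq_iff)

lemma cong_mod_sym: assumes "cong_mod T L p q" shows "cong_mod T L q p"
proof -
  have "fs_smul (-1) (fs_diff p q) \<in> ideal_mod T L" using assms unfolding cong_mod_def
    by (rule ideal_mod.smul)
  then show ?thesis unfolding cong_mod_def by (rule ideal_mod.coef_eq) (simp add: fun_eq_iff)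
qed

lemma cong_mod_trans: assumes "cong_mod T L p q" "cong_mod T L q r" shows "cong_mod T L p r"
proof -
  have "fs_diff p q @ fs_diff q r \<in> ideal_mod T L" using assms unfolding cong_mod_def
    by (rule ideal_mod_append)
  then show ?thesis unfolding cong_mod_def by (rule ideal_mod.coef_eq) (simp add: fun_eq_iff)
qed

lemma cong_mod_coef_subst:
  "coef p = coef p' \<Longrightarrow> coef q = coef q' \<Longrightarrow> cong_mod T L p' q' \<Longrightarrow> cong_mod T L p q"
  by (meson cong_mod_coefI cong_mod_sym cong_mod_trans)

lemma cong_mod_append:
  assumes "cong_mod T L p q" "cong_mod T L p' q'"
  shows "cong_mod T L (p @ p') (q @ q')"
proof -
  have "fs_diff p q @ fs_diff p' q' \<in> ideal_mod T L" using assms unfolding cong_mod_def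
    by (rule ideal_mod_append)
  then show ?thesis unfolding cong_mod_def by (rule ideal_mod.coef_eq) (simp add: fun_eq_iff)
qed

lemma cong_mod_smul: assumes "cong_mod T L p q" shows "cong_mod T L (fs_smul a p) (fs_smul a q)"
proof -
  have "fs_smul a (fs_diff p q) \<in> ideal_mod T L" using assms unfolding cong_mod_def
    by (rule ideal_mod.smul)
  then show ?thesis unfolding cong_mod_def by (rule ideal_mod.coef_eq)
    (simp add: fun_eq_iff algebra_simps)
qed

lemma cong_mod_linear_image:
  assumes "cong_mod T L p q" and Q: "fs_linear Q"
    and ideal: "\<And>r. r \<in> ideal_mod T L \<Longrightarrow> Q r \<in> ideal_mod T' L'"
  shows "cong_mod T' L' (Q p) (Q q)"
proof -
  have "Q (fs_diff p q) \<in> ideal_mod T' L'" using assms(1) unfolding cong_mod_def by (rule ideal)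
  moreover have "coef (fs_diff (Q p) (Q q)) = coef (Q (fs_diff p q))"
    using fs_linear_apply_append[OF Q, of p "fs_smul (-1) q"] fs_linear_apply_smul[OF Q, of "-1" q]
    by (simp add: fs_diff_def fs_add_def fun_eq_iff)
  ultimately show ?thesis unfolding cong_mod_def by (rule ideal_mod.coef_eq)
qed

lemma cong_mod_mul_left: "cong_mod T L p q \<Longrightarrow> cong_mod T L (fs_mul l p) (fs_mul l q)"
  by (erule cong_mod_linear_image[OF _ fs_linear_fs_mul_right ideal_mod_mul_left])

lemma cong_mod_extend:
  "(\<And>c w. (c,w) \<in> set p \<Longrightarrow> cong_mod T L (f w) (g w))
      \<Longrightarrow> cong_mod T L (fs_extend f p) (fs_extend g p)"
proof (induction p)
  case Nil then show ?case by (simp add: cong_mod_refl)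
next
  case (Cons x p) then show ?case by (cases x) (auto intro!: cong_mod_append cong_mod_smul)
qed

lemma cong_mod_mono: "cong_mod T {} p q \<Longrightarrow> cong_mod T L p q"
  unfolding cong_mod_def by (erule ideal_mod_mono) auto

definition bracket_coef :: "sl2b \<Rightarrow> sl2b \<Rightarrow> sl2b \<Rightarrow> complex" where
  "bracket_coef a b z = sum_list (map (\<lambda>(c,x). if x = z then c else 0) (sl2_bracket a b))"

lemma bracket_coef_simps[simp]:
  "bracket_coef sE sE z = 0" "bracket_coef sF sF z = 0" "bracket_coef sH sH z = 0"
  "bracket_coef sE sF z = (if z = sH then 1 else 0)" "bracket_coef sF sE z = (if z = sH then -1 else 0)"
  "bracket_coef sH sE z = (if z = sE then 2 else 0)" "bracket_coef sE sH z = (if z = sE then -2 else 0)"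
  "bracket_coef sH sF z = (if z = sF then -2 else 0)" "bracket_coef sF sH z = (if z = sF then 2 else 0)"
  by (auto simp: bracket_coef_def)

lemma bracket_coef_antisym: "bracket_coef b a z = - bracket_coef a b z"
  by (cases a; cases b; simp)
lemma sl2_form_sym: "sl2_form b a = sl2_form a b"
  by (cases a; cases b; simp)

lemma bracket_coef_jacobi:
  "(\<Sum>z\<in>{sE,sF,sH}. bracket_coef a b z * bracket_coef z c w) =
   (\<Sum>z\<in>{sE,sF,sH}. bracket_coef a c z * bracket_coef z b w) +
   (\<Sum>z\<in>{sE,sF,sH}. bracket_coef b c z * bracket_coef a z w)"
  by (cases a; cases b; cases c; cases w) simp_all

definition basis_sum :: "(sl2b \<Rightarrow> 'a fsum) \<Rightarrow> 'a fsum" where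
  "basis_sum F = F sE @ F sF @ F sH"
lemma coef_basis_sum[simp]: "coef (basis_sum F) u = coef (F sE) u + coef (F sF) u + coef (F sH) u"
  by (simp add: basis_sum_def)
lemma fs_linear_basis_sum:
  "(\<And>z. fs_linear (F z)) \<Longrightarrow> fs_linear (\<lambda>p. basis_sum (\<lambda>z. F z p))"
  unfolding basis_sum_def by (intro fs_linear_append) auto
lemma word_mul_basis_sum[simp]:
  "word_mul v (basis_sum F) = basis_sum (\<lambda>z. word_mul v (F z))"
  by (simp add: basis_sum_def)
lemma fs_mul_basis_sum[simp]:
  "fs_mul (basis_sum F) X = basis_sum (\<lambda>z. fs_mul (F z) X)"
  by (simp add: basis_sum_def)
lemma coef_bracket_map:
  "coef (map (\<lambda>(c,x). (c, h x)) (sl2_bracket a b))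
      = coef (basis_sum (\<lambda>z. [(bracket_coef a b z, h z)]))"
  by (cases a; cases b) (simp_all add: fun_eq_iff)
lemma coef_fs_lin_bracket:
  "coef (fs_lin (sl2_bracket a b)) = coef (basis_sum (\<lambda>z. [(bracket_coef a b z, [z])]))"
  by (cases a; cases b) (simp_all add: fs_lin_def fun_eq_iff)

section \<open>The vacuum module\<close>

text \<open>The pair (b, i) stands for the negative mode b(-i-1).\<close>
type_synonym neg_mode = "sl2b \<times> nat"

fun vac_rel :: "neg_mode \<Rightarrow> neg_mode \<Rightarrow> neg_mode fsum" where
  "vac_rel (a,i) (b,j) = [(1,[(a,i),(b,j)])] @ [(-1,[(b,j),(a,i)])]
      @ fs_smul (-1) (basis_sum (\<lambda>z. [(bracket_coef a b z, [(z, i+j+1)])]))"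

definition vac_rels :: "neg_mode fsum set" where "vac_rels = {vac_rel x y | x y. True}"

abbreviation vac_ideal where "vac_ideal \<equiv> ideal_mod vac_rels {}"

lemma fs_mul_vac_rel:
  "coef (fs_mul (vac_rel (a,i) (b,j)) X) = coef (word_mul [(a,i)] (word_mul [(b,j)] X) @
      fs_smul (-1) (word_mul [(b,j)] (word_mul [(a,i)] X))
      @ fs_smul (-1) (basis_sum (\<lambda>z. fs_smul (bracket_coef a b z) (word_mul [(z,i+j+1)] X))))"
  by (simp add: basis_sum_def fs_mul_smul1 fun_eq_iff)

lemma vac_rel_mul_in_ideal: "fs_mul (vac_rel x y) X \<in> vac_ideal"
proof -
  have "vac_rel x y \<in> vac_rels" unfolding vac_rels_def by blast
  then have "fs_mul (fs_mul [(1,[])] (vac_rel x y)) X \<in> vac_ideal" by (rule ideal_mod.two_sided)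
  then show ?thesis by (rule ideal_mod.coef_eq) (rule fs_mul_cong1[OF fs_mul_one1[symmetric]])
qed

text \<open>a(m) b(-i-1) w = [a,b](m-i-1) w + m (a|b) k w [if m = i+1] + b(-i-1) a(m) w, and a(m)
  kills the vacuum.\<close>
fun pos_act_word :: "complex \<Rightarrow> sl2b \<Rightarrow> nat \<Rightarrow> neg_mode list \<Rightarrow> neg_mode fsum" where
  "pos_act_word k a m [] = []"
| "pos_act_word k a m ((b,i)#w) =
     (if i < m then basis_sum (\<lambda>z. fs_smul (bracket_coef a b z) (pos_act_word k z (m - i - 1) w))
      else basis_sum (\<lambda>z. [(bracket_coef a b z, (z, i - m) # w)]))
     @ (if m = i + 1 then [(of_nat m * sl2_form a b * k, w)] else [])
     @ word_mul [(b,i)] (pos_act_word k a m w)"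

definition pos_act :: "complex \<Rightarrow> sl2b \<Rightarrow> nat \<Rightarrow> neg_mode fsum \<Rightarrow> neg_mode fsum" where
  "pos_act k a m = fs_extend (pos_act_word k a m)"

definition mode_act :: "complex \<Rightarrow> sl2b \<Rightarrow> int \<Rightarrow> neg_mode fsum \<Rightarrow> neg_mode fsum" where
  "mode_act k z M p = (if 0 \<le> M then pos_act k z (nat M) p else word_mul [(z, nat (-M-1))] p)"

definition central_coef :: "complex \<Rightarrow> sl2b \<Rightarrow> int \<Rightarrow> sl2b \<Rightarrow> int \<Rightarrow> complex" where
  "central_coef k a m b l = (if m + l = 0 then of_int m * sl2_form a b * k else 0)"

definition bracket_act :: "complex \<Rightarrow> sl2b \<Rightarrow> int \<Rightarrow> sl2b \<Rightarrow> int \<Rightarrow> neg_mode fsum \<Rightarrow> neg_mode fsum" where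
  "bracket_act k a m b l p =
     basis_sum (\<lambda>z. fs_smul (bracket_coef a b z) (mode_act k z (m + l) p))
     @ fs_smul (central_coef k a m b l) p"

lemma fs_linear_pos_act: "fs_linear (pos_act k a m)"
  unfolding pos_act_def by (rule fs_linear_extend)

lemma fs_linear_mode_act: "fs_linear (mode_act k z M)"
  unfolding mode_act_def
  by (cases "0 \<le> M") (simp_all add: fs_linear_pos_act fs_linear_word_mul)

lemma fs_linear_bracket_act: "fs_linear (bracket_act k a m b l)"
  unfolding bracket_act_def
  by (intro fs_linear_append fs_linear_basis_sum fs_linear_smul fs_linear_mode_act fs_linear_id)

lemma pos_act_single: "coef (pos_act k a m [(1,w)]) = coef (pos_act_word k a m w)"
  by (simp add: pos_act_def fun_eq_iff)
lemma mode_act_single: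
  "coef (mode_act k z M [(1,w)]) =
    coef (if 0 \<le> M then pos_act_word k z (nat M) w else [(1, (z, nat (-M-1)) # w)])"
  by (simp add: mode_act_def pos_act_single)
lemma pos_act_append[simp]:
  "pos_act k a m (p @ q) = pos_act k a m p @ pos_act k a m q"
  by (simp add: pos_act_def)
lemma coef_pos_act_smul[simp]: "coef (pos_act k a m (fs_smul c p)) u = c * coef (pos_act k a m p) u"
  unfolding pos_act_def using fs_extend_smul[of "pos_act_word k a m" c p] by (simp add: fun_eq_iff)
lemma pos_act_basis_sum[simp]:
  "pos_act k a m (basis_sum F) = basis_sum (\<lambda>z. pos_act k a m (F z))"
  by (simp add: basis_sum_def)
lemma pos_act_zero: "coef p = coef [] \<Longrightarrow> coef (pos_act k a m p) = coef []"
  by (rule fs_linear_apply_zero[OF fs_linear_pos_act])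

lemma bracket_act_antisym:
  "coef (bracket_act k b l a m v) = coef (fs_smul (-1) (bracket_act k a m b l v))"
proof -
  have c: "central_coef k b l a m = - central_coef k a m b l"
  proof (cases "m + l = 0")
    case True
    then have "l = - m" by simp
    then show ?thesis by (simp add: central_coef_def sl2_form_sym)
  qed (auto simp: central_coef_def)
  have mm: "l + m = m + l" by simp
  show ?thesis by (simp add: bracket_act_def fun_eq_iff bracket_coef_antisym[of b a] c mm)
qed

lemma pos_act_word_mul:
  "coef (pos_act k a m (word_mul [(b,i)] p)) = coef (bracket_act k a (int m) b (- int i - 1) p @
      word_mul [(b,i)] (pos_act k a m p))"
proof (rule fs_linear_eq[where QA="\<lambda>p. pos_act k a m (word_mul [(b,i)] p)"
    and QB="\<lambda>p. bracket_act k a (int m) b (- int i - 1) p @ word_mul [(b,i)] (pos_act k a m p)"])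
  show "fs_linear (\<lambda>p. pos_act k a m (word_mul [(b,i)] p))"
    by (rule fs_linear_comp[OF fs_linear_pos_act fs_linear_word_mul])
  show "fs_linear (\<lambda>p. bracket_act k a (int m) b (- int i - 1) p @
    word_mul [(b,i)] (pos_act k a m p))"
    by (rule fs_linear_append[OF fs_linear_bracket_act fs_linear_comp[OF fs_linear_word_mul
      fs_linear_pos_act]])
  fix w
  have l: "coef (pos_act k a m (word_mul [(b,i)] [(1,w)])) = coef (pos_act_word k a m ((b,i)#w))"
    by (simp add: pos_act_single)
  have r2: "coef (word_mul [(b,i)] (pos_act k a m [(1,w)]))
    = coef (word_mul [(b,i)] (pos_act_word k a m w))"
    by (rule fs_linear_coef_cong[OF fs_linear_word_mul pos_act_single])
  have ce: "(int m + (- int i - 1) = 0) = (m = i + 1)" by auto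
  have r1: "coef (bracket_act k a (int m) b (- int i - 1) [(1,w)]) =
     coef ((if i < m then basis_sum (\<lambda>z. fs_smul (bracket_coef a b z) (pos_act_word k z (m - i - 1) w))
      else basis_sum (\<lambda>z. [(bracket_coef a b z, (z, i - m) # w)]))
     @ (if m = i + 1 then [(of_nat m * sl2_form a b * k, w)] else []))"
  proof (cases "i < m")
    case True
    then have "0 \<le> int m + (- int i - 1)" "nat (int m + (- int i - 1)) = m - i - 1" by auto
    then show ?thesis using True
      by (simp add: bracket_act_def fun_eq_iff mode_act_single central_coef_def ce)
  next
    case False
    then have "\<not> 0 \<le> int m + (- int i - 1)" "nat (- (int m + (- int i - 1)) - 1) = i - m"
      by auto
    then show ?thesis using False
      by (simp add: bracket_act_def fun_eq_iff mode_act_single central_coef_def ce)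
  qed
  show "coef (pos_act k a m (word_mul [(b, i)] [(1, w)])) =
        coef (bracket_act k a (int m) b (- int i - 1) [(1, w)] @
          word_mul [(b, i)] (pos_act k a m [(1, w)]))"
    using l r1 r2 by (simp add: fun_eq_iff)
qed

lemma mode_act_word_mul:
  "fs_diff (mode_act k z M (word_mul [(b,j)] X))
     (word_mul [(b,j)] (mode_act k z M X) @ bracket_act k z M b (- int j - 1) X) \<in> vac_ideal"
proof (cases "0 \<le> M")
  case True
  then have "coef (pos_act k z (nat M) (word_mul [(b,j)] X)) =
      coef (bracket_act k z M b (- int j - 1) X @ word_mul [(b,j)] (pos_act k z (nat M) X))"
    using pos_act_word_mul[of k z "nat M" b j X] by simp
  then show ?thesis using True
    by (intro ideal_mod_zero_coef) (simp add: mode_act_def fun_eq_iff)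
next
  case False
  define n where "n = nat (-M-1)"
  have nn: "nat (int j - M) = Suc (n + j)" using False by (simp add: n_def)
  have c0: "central_coef k z M b (- int j - 1) = 0" using False by (simp add: central_coef_def)
  have "coef (fs_diff (mode_act k z M (word_mul [(b,j)] X))
      (word_mul [(b,j)] (mode_act k z M X) @ bracket_act k z M b (- int j - 1) X)) =
    coef (fs_mul (vac_rel (z,n) (b,j)) X)"
    unfolding fs_mul_vac_rel using False
    by (simp add: mode_act_def n_def[symmetric] bracket_act_def nn c0 fun_eq_iff)
  then show ?thesis by (rule ideal_mod.coef_eq[OF vac_rel_mul_in_ideal])
qed

text \<open>The central terms satisfy the Jacobi identity because the form is invariant.\<close>
lemma central_coef_jacobi:
  "(\<Sum>z\<in>{sE,sF,sH}. bracket_coef a b z * central_coef k z (m + l) c n) =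
   (\<Sum>z\<in>{sE,sF,sH}. bracket_coef a c z * central_coef k z (m + n) b l) +
   (\<Sum>z\<in>{sE,sF,sH}. bracket_coef b c z * central_coef k a m z (l + n))"
proof (cases "m + l + n = 0")
  case True
  then have n: "n = - m - l" by simp
  show ?thesis unfolding n
    by (cases a; cases b; cases c) (simp_all add: central_coef_def algebra_simps)
next
  case False
  then show ?thesis by (simp add: central_coef_def algebra_simps)
qed

lemma sum_mult_sum_add:
  fixes A C :: "'a \<Rightarrow> 'c::comm_ring"
  shows "(\<Sum>z\<in>S. A z * ((\<Sum>w\<in>T. B z w * X w) + C z * Y)) =
    (\<Sum>w\<in>T. (\<Sum>z\<in>S. A z * B z w) * X w) + (\<Sum>z\<in>S. A z * C z) * Y"
  by (simp add: sum.distrib sum_distrib_left sum_distrib_right algebra_simps sum.swap[of _ S T])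

lemma coef_basis_sum_eq_sum: "coef (basis_sum F) u = (\<Sum>z\<in>{sE,sF,sH}. coef (F z) u)"
  by (simp add: add.assoc)

lemma coef_bracket_act:
  "coef (bracket_act k a m b l p) u =
    (\<Sum>w\<in>{sE,sF,sH}. bracket_coef a b w * coef (mode_act k w (m + l) p) u)
      + central_coef k a m b l * coef p u"
  by (simp add: bracket_act_def add.assoc)

lemma bracket_act_jacobi:
  "coef (basis_sum (\<lambda>z. fs_smul (bracket_coef a b z) (bracket_act k z (m + l) c n p))) =
   coef (basis_sum (\<lambda>z. fs_smul (bracket_coef a c z) (bracket_act k z (m + n) b l p))
     @ basis_sum (\<lambda>z. fs_smul (bracket_coef b c z) (bracket_act k a m z (l + n) p)))"
proof (rule ext)
  fix u
  have M: "m + n + l = m + l + n" "m + (l + n) = m + l + n" by simp_all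
  show "coef (basis_sum (\<lambda>z. fs_smul (bracket_coef a b z) (bracket_act k z (m + l) c n p))) u =
    coef (basis_sum (\<lambda>z. fs_smul (bracket_coef a c z) (bracket_act k z (m + n) b l p))
      @ basis_sum (\<lambda>z. fs_smul (bracket_coef b c z) (bracket_act k a m z (l + n) p))) u"
    unfolding coef_append coef_basis_sum_eq_sum coef_smul coef_bracket_act M sum_mult_sum_add
      bracket_coef_jacobi[of a b c] central_coef_jacobi[of a b k m l c n]
    by (simp only: distrib_right sum.distrib add_ac)
qed

lemma bracket_act_word_mul:
  "fs_diff (bracket_act k a m b l (word_mul [(c,j)] r))
     (word_mul [(c,j)] (bracket_act k a m b l r)
      @ basis_sum (\<lambda>z. fs_smul (bracket_coef a b z) (bracket_act k z (m + l) c (- int j - 1) r)))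
   \<in> vac_ideal"
proof (rule ideal_mod.coef_eq)
  show "basis_sum (\<lambda>z. fs_smul (bracket_coef a b z)
      (fs_diff (mode_act k z (m + l) (word_mul [(c,j)] r))
        (word_mul [(c,j)] (mode_act k z (m + l) r) @ bracket_act k z (m + l) c (- int j - 1) r)))
    \<in> vac_ideal"
    unfolding basis_sum_def by (intro ideal_mod_append ideal_mod.smul mode_act_word_mul)
qed (simp add: bracket_act_def[of k a m b l] fun_eq_iff algebra_simps)

lemma pos_act_word_mul_word_mul:
  "coef (pos_act k a m (word_mul [(b,i)] (word_mul [(c,j)] r))) u =
     coef (bracket_act k a (int m) b (- int i - 1) (word_mul [(c,j)] r)) u
   + coef (word_mul [(b,i)] (bracket_act k a (int m) c (- int j - 1) r)) u
   + coef (word_mul [(b,i)] (word_mul [(c,j)] (pos_act k a m r))) u"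
  using pos_act_word_mul[of k a m b i "word_mul [(c,j)] r"]
    coef_word_mul_cong[OF pos_act_word_mul[of k a m c j r], of "[(b,i)]" u]
  by (simp add: fun_eq_iff)

lemma pos_act_vac_rel: "pos_act k a m (fs_mul (vac_rel (b,i) (b',j)) r) \<in> vac_ideal"
proof -
  define li lj where "li = - int i - 1" and "lj = - int j - 1"
  define T where "T =
      fs_diff (bracket_act k a (int m) b li (word_mul [(b',j)] r))
        (word_mul [(b',j)] (bracket_act k a (int m) b li r)
         @ basis_sum (\<lambda>z. fs_smul (bracket_coef a b z) (bracket_act k z (int m + li) b' lj r)))
    @ fs_smul (-1) (fs_diff (bracket_act k a (int m) b' lj (word_mul [(b,i)] r))
        (word_mul [(b,i)] (bracket_act k a (int m) b' lj r)
         @ basis_sum (\<lambda>z. fs_smul (bracket_coef a b' z) (bracket_act k z (int m + lj) b li r))))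
    @ fs_mul (vac_rel (b,i) (b',j)) (pos_act k a m r)"
  define J where "J =
      basis_sum (\<lambda>z. fs_smul (bracket_coef a b z) (bracket_act k z (int m + li) b' lj r))
    @ fs_smul (-1) (basis_sum (\<lambda>z. fs_smul (bracket_coef a b' z) (bracket_act k z (int m + lj) b li r)))
    @ fs_smul (-1) (basis_sum (\<lambda>z. fs_smul (bracket_coef b b' z) (bracket_act k a (int m) z (li + lj) r)))"
  have "T \<in> vac_ideal"
    unfolding T_def li_def lj_def
    by (intro ideal_mod_append ideal_mod.smul bracket_act_word_mul vac_rel_mul_in_ideal)
  moreover have "J \<in> vac_ideal"
    using bracket_act_jacobi[of a b k "int m" li b' lj r]
    by (intro ideal_mod_zero_coef) (simp add: J_def fun_eq_iff)
  ultimately have "T @ J \<in> vac_ideal" by (rule ideal_mod_append)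
  moreover have "coef (pos_act k a m (fs_mul (vac_rel (b,i) (b',j)) r)) = coef (T @ J)"
  proof (rule ext)
    fix u
    have ln: "- int (i + j + 1) - 1 = li + lj" by (simp add: li_def lj_def)
    have "coef (pos_act k a m (fs_mul (vac_rel (b,i) (b',j)) r))
      = coef (pos_act k a m (word_mul [(b,i)] (word_mul [(b',j)] r)
        @ fs_smul (-1) (word_mul [(b',j)] (word_mul [(b,i)] r))
        @ fs_smul (-1) (basis_sum (\<lambda>z. fs_smul (bracket_coef b b' z) (word_mul [(z, i + j + 1)] r)))))"
      by (rule fs_linear_coef_cong[OF fs_linear_pos_act fs_mul_vac_rel])
    moreover note pos_act_word_mul_word_mul[of k a m b i b' j r u, folded li_def lj_def]
      pos_act_word_mul_word_mul[of k a m b' j b i r u, folded li_def lj_def]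
    moreover have "coef (pos_act k a m (word_mul [(z, i + j + 1)] r)) u =
        coef (bracket_act k a (int m) z (li + lj) r) u +
          coef (word_mul [(z, i + j + 1)] (pos_act k a m r)) u" for z
      using pos_act_word_mul[of k a m z "i + j + 1" r, unfolded ln] by (simp add: fun_eq_iff)
    ultimately show "coef (pos_act k a m (fs_mul (vac_rel (b,i) (b',j)) r)) u = coef (T @ J) u"
      unfolding T_def J_def
      by (simp add: fs_mul_smul1 algebra_simps)
  qed
  ultimately show ?thesis by (rule ideal_mod.coef_eq)
qed

lemma pos_act_word_mul_vac_rel:
  "t \<in> vac_rels \<Longrightarrow> pos_act k a m (word_mul v (fs_mul t r)) \<in> vac_ideal"
proof (induction v arbitrary: a m)
  case Nil
  then obtain x y where t: "t = vac_rel x y" unfolding vac_rels_def by blast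
  obtain b i where x: "x = (b,i)" by force
  obtain b' j where y: "y = (b',j)" by force
  show ?case unfolding t x y word_mul_Nil_word by (rule pos_act_vac_rel)
next
  case (Cons y v)
  obtain b i where y: "y = (b,i)" by force
  define X where "X = word_mul v (fs_mul t r)"
  obtain x1 y1 where t: "t = vac_rel x1 y1" using Cons.prems unfolding vac_rels_def by blast
  have X: "X \<in> vac_ideal" unfolding X_def t by (rule ideal_mod_word_mul) (rule vac_rel_mul_in_ideal)
  have IH: "\<And>a m. pos_act k a m X \<in> vac_ideal" unfolding X_def by (rule Cons.IH[OF Cons.prems])
  have mode_act_X: "mode_act k z M X \<in> vac_ideal" for z M
    unfolding mode_act_def pos_act_def[symmetric]
    by (cases "0 \<le> M") (auto intro: IH ideal_mod_word_mul X)
  have "bracket_act k a (int m) b (- int i - 1) X @ word_mul [y] (pos_act k a m X) \<in> vac_ideal"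
    unfolding bracket_act_def basis_sum_def y
    by (intro ideal_mod_append ideal_mod.smul mode_act_X X ideal_mod_word_mul IH)
  moreover have "coef (pos_act k a m (word_mul (y#v) (fs_mul t r)))
    = coef (bracket_act k a (int m) b (- int i - 1) X @ word_mul [y] (pos_act k a m X))"
    using pos_act_word_mul[of k a m b i X] by (simp add: X_def y)
  ultimately show ?case by (rule ideal_mod.coef_eq)
qed

lemma pos_act_vac_ideal: "p \<in> vac_ideal \<Longrightarrow> pos_act k a m p \<in> vac_ideal"
proof (erule ideal_mod_linear_image[OF _ fs_linear_pos_act])
  fix l t r assume t: "t \<in> vac_rels"
  have "fs_mul (fs_mul l t) r = fs_extend (\<lambda>v. word_mul v (fs_mul t r)) l"
    by (simp only: fs_mul_assoc) (rule fs_mul_eq_extend)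
  then have "coef (pos_act k a m (fs_mul (fs_mul l t) r)) =
      coef (fs_extend (\<lambda>v. pos_act k a m (word_mul v (fs_mul t r))) l)"
    by (simp only: fs_linear_apply_extend[OF fs_linear_pos_act])
  moreover have "fs_extend (\<lambda>v. pos_act k a m (word_mul v (fs_mul t r))) l \<in> vac_ideal"
    by (rule ideal_mod_extend) (rule pos_act_word_mul_vac_rel[OF t])
  ultimately show "pos_act k a m (fs_mul (fs_mul l t) r) \<in> vac_ideal"
    by (rule ideal_mod.coef_eq[rotated])
qed simp

lemma mode_act_vac_ideal: "p \<in> vac_ideal \<Longrightarrow> mode_act k z M p \<in> vac_ideal"
  by (simp add: mode_act_def pos_act_vac_ideal ideal_mod_word_mul)

lemma pos_act_mode_act:
  assumes comm: "\<And>b l. coef (pos_act k a m (pos_act k b l W)) =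
    coef (pos_act k b l (pos_act k a m W)
      @ basis_sum (\<lambda>z. fs_smul (bracket_coef a b z) (pos_act k z (m + l) W)))"
  shows "coef (pos_act k a m (mode_act k z M W)) =
    coef (mode_act k z M (pos_act k a m W) @ bracket_act k a (int m) z M W)"
proof (cases "0 \<le> M")
  case True
  have "nat (int m + M) = m + nat M" using True by simp
  moreover have "central_coef k a (int m) z M = 0"
    using True by (auto simp: central_coef_def)
  ultimately show ?thesis
    using comm[of z "nat M"] True by (simp add: mode_act_def bracket_act_def fun_eq_iff)
next
  case False
  define n where "n = nat (-M-1)"
  have "- int n - 1 = M" using False by (simp add: n_def)
  then show ?thesis using False pos_act_word_mul[of k a m z n W]
    by (simp add: mode_act_def n_def fun_eq_iff)
qed

lemma pos_act_bracket_act: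
  assumes comm: "\<And>b l. coef (pos_act k a m (pos_act k b l W)) =
    coef (pos_act k b l (pos_act k a m W)
      @ basis_sum (\<lambda>z. fs_smul (bracket_coef a b z) (pos_act k z (m + l) W)))"
  shows "coef (pos_act k a m (bracket_act k b l c n W)) =
    coef (bracket_act k b l c n (pos_act k a m W)
      @ basis_sum (\<lambda>z. fs_smul (bracket_coef b c z) (bracket_act k a (int m) z (l + n) W)))"
  using pos_act_mode_act[OF comm, of _ "l + n"]
  by (simp add: bracket_act_def[of k b l c n] fun_eq_iff algebra_simps)

lemma pos_act_pos_act_word_mul:
  assumes comm: "\<And>b l. coef (pos_act k a m (pos_act k b l W)) =
    coef (pos_act k b l (pos_act k a m W)
      @ basis_sum (\<lambda>z. fs_smul (bracket_coef a b z) (pos_act k z (m + l) W)))"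
  shows "coef (pos_act k a m (pos_act k b l (word_mul [(c,i)] W))) u =
      coef (bracket_act k b (int l) c (- int i - 1) (pos_act k a m W)) u
    + coef (basis_sum (\<lambda>z. fs_smul (bracket_coef b c z) (bracket_act k a (int m) z (int l + (- int i - 1)) W))) u
    + coef (bracket_act k a (int m) c (- int i - 1) (pos_act k b l W)) u
    + coef (word_mul [(c,i)] (pos_act k a m (pos_act k b l W))) u"
  using fs_linear_coef_cong[OF fs_linear_pos_act pos_act_word_mul[of k b l c i W], of k a m]
    pos_act_bracket_act[where b=b and l="int l" and c=c and n="- int i - 1", OF comm]
    pos_act_word_mul[of k a m c i "pos_act k b l W"]
  by (simp add: fun_eq_iff)

lemma pos_act_commutator_word:
  "coef (pos_act k a m (pos_act k b l [(1,w)])) =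
   coef (pos_act k b l (pos_act k a m [(1,w)])
     @ basis_sum (\<lambda>z. fs_smul (bracket_coef a b z) (pos_act k z (m + l) [(1,w)])))"
proof (induction w arbitrary: a b m l)
  case Nil
  have z: "coef (pos_act k c n [(1,[])]) = coef []" for c n by (simp add: pos_act_single)
  show ?case
    using pos_act_zero[OF z[of b l], of k a m] pos_act_zero[OF z[of a m], of k b l] z
    by (simp add: fun_eq_iff)
next
  case (Cons x w)
  obtain c i where x: "x = (c,i)" by force
  define W where "W = [(1::complex, w)]"
  define li where "li = - int i - 1"
  have cW: "[(1, x#w)] = word_mul [(c,i)] W" by (simp add: W_def x)
  have IH: "coef (pos_act k a' m' (pos_act k b' l' W)) =
      coef (pos_act k b' l' (pos_act k a' m' W)
        @ basis_sum (\<lambda>z. fs_smul (bracket_coef a' b' z) (pos_act k z (m' + l') W)))" for a' b' m' l'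
    unfolding W_def by (rule Cons.IH)
  define J where "J =
      basis_sum (\<lambda>z. fs_smul (bracket_coef a b z) (bracket_act k z (int m + int l) c li W))
    @ basis_sum (\<lambda>z. fs_smul (bracket_coef a c z) (bracket_act k b (int l) z (int m + li) W))
    @ fs_smul (-1)
        (basis_sum (\<lambda>z. fs_smul (bracket_coef b c z) (bracket_act k a (int m) z (int l + li) W)))"
  have J: "coef J = coef []"
    using bracket_act_jacobi[of a b k "int m" "int l" c li W]
      bracket_act_antisym[of k _ "int m + li" b "int l" W]
    by (simp add: J_def fun_eq_iff)
  show ?case
  proof (rule ext)
    fix u
    note pos_act_pos_act_word_mul[where a=a and m=m and b=b and l=l and c=c and i=i and u=u, OF IH,
        folded li_def]
      pos_act_pos_act_word_mul[where a=b and m=l and b=a and l=m and c=c and i=i and u=u, OF IH,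
        folded li_def]
    moreover have "coef (pos_act k z (m + l) (word_mul [(c,i)] W)) u =
        coef (bracket_act k z (int m + int l) c li W) u
      + coef (word_mul [(c,i)] (pos_act k z (m + l) W)) u" for z
      using pos_act_word_mul[of k z "m + l" c i W, folded li_def] by (simp add: fun_eq_iff)
    moreover have "coef (word_mul [(c,i)] (pos_act k a m (pos_act k b l W))) u =
        coef (word_mul [(c,i)] (pos_act k b l (pos_act k a m W))) u
      + coef (word_mul [(c,i)] (basis_sum (\<lambda>z. fs_smul (bracket_coef a b z) (pos_act k z (m + l) W)))) u"
      using coef_word_mul_cong[OF IH[of a m b l], of "[(c,i)]" u] by simp
    ultimately show "coef (pos_act k a m (pos_act k b l [(1, x # w)])) u =
        coef (pos_act k b l (pos_act k a m [(1, x # w)])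
          @ basis_sum (\<lambda>z. fs_smul (bracket_coef a b z) (pos_act k z (m + l) [(1, x # w)]))) u"
      using J unfolding cW J_def by (simp add: fun_eq_iff algebra_simps)
  qed
qed

lemma pos_act_commutator:
  "coef (pos_act k a m (pos_act k b l p)) =
   coef (pos_act k b l (pos_act k a m p)
     @ basis_sum (\<lambda>z. fs_smul (bracket_coef a b z) (pos_act k z (m + l) p)))"
proof (rule fs_linear_eq[where QA="\<lambda>p. pos_act k a m (pos_act k b l p)"
    and QB="\<lambda>p. pos_act k b l (pos_act k a m p)
      @ basis_sum (\<lambda>z. fs_smul (bracket_coef a b z) (pos_act k z (m + l) p))"])
  show "fs_linear (\<lambda>p. pos_act k a m (pos_act k b l p))"
    by (rule fs_linear_comp[OF fs_linear_pos_act fs_linear_pos_act])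
  show "fs_linear (\<lambda>p. pos_act k b l (pos_act k a m p)
      @ basis_sum (\<lambda>z. fs_smul (bracket_coef a b z) (pos_act k z (m + l) p)))"
    by (rule fs_linear_append[OF fs_linear_comp[OF fs_linear_pos_act fs_linear_pos_act]
        fs_linear_basis_sum[OF fs_linear_smul[OF fs_linear_pos_act]]])
qed (rule pos_act_commutator_word)

lemma mode_act_commutator:
  "mode_act k a m (mode_act k b l v) @ fs_smul (-1) (mode_act k b l (mode_act k a m v))
     @ fs_smul (-1) (bracket_act k a m b l v) \<in> vac_ideal"
  (is "?R \<in> vac_ideal")
proof (cases "0 \<le> m")
  case m: True
  show ?thesis
  proof (cases "0 \<le> l")
    case l: True
    have e: "nat (m + l) = nat m + nat l" using m l by simp
    have c: "central_coef k a m b l = 0" using m l by (auto simp: central_coef_def)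
    show ?thesis
      using pos_act_commutator[of k a "nat m" b "nat l" v] m l
      by (intro ideal_mod_zero_coef) (simp add: mode_act_def bracket_act_def e c fun_eq_iff)
  next
    case l: False
    define j where "j = nat (-l-1)"
    have e: "- int j - 1 = l" using l by (simp add: j_def)
    show ?thesis
      using pos_act_word_mul[of k a "nat m" b j v] m l unfolding e
      by (intro ideal_mod_zero_coef) (simp add: mode_act_def j_def fun_eq_iff)
  qed
next
  case m: False
  define i where "i = nat (-m-1)"
  have ei: "- int i - 1 = m" using m by (simp add: i_def)
  show ?thesis
  proof (cases "0 \<le> l")
    case l: True
    have "coef (pos_act k b (nat l) (word_mul [(a,i)] v))
      = coef (bracket_act k b l a m v @ word_mul [(a,i)] (pos_act k b (nat l) v))"
      using pos_act_word_mul[of k b "nat l" a i v] l unfolding ei by simp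
    then show ?thesis
      using bracket_act_antisym[of k b l a m v] m l
      by (intro ideal_mod_zero_coef) (simp add: mode_act_def i_def[symmetric] fun_eq_iff)
  next
    case l: False
    define j where "j = nat (-l-1)"
    have ej: "nat (- m - l - 1) = Suc (i + j)" using m l by (simp add: i_def j_def)
    have c: "central_coef k a m b l = 0" using m l by (auto simp: central_coef_def)
    have "coef ?R = coef (fs_mul (vac_rel (a,i) (b,j)) v)"
      unfolding fs_mul_vac_rel using m l
      by (simp add: mode_act_def i_def[symmetric] j_def[symmetric] bracket_act_def ej c fun_eq_iff)
    then show ?thesis by (rule ideal_mod.coef_eq[OF vac_rel_mul_in_ideal])
  qed
qed

section \<open>The affine algebra acting on the vacuum module\<close>

definition ghat_rel :: "sl2b \<Rightarrow> int \<Rightarrow> sl2b \<Rightarrow> int \<Rightarrow> aff fsum" where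
  "ghat_rel a m b l =
     fs_diff (fs_diff (fs_diff [(1, [Mode a m, Mode b l])] [(1, [Mode b l, Mode a m])])
        (map (\<lambda>(c, x). (c, [Mode x (m + l)])) (sl2_bracket a b)))
      [((if m + l = 0 then of_int m * sl2_form a b else 0), [Cen])]"

lemma ghat_rels_eq:
  "ghat_rels = {ghat_rel a m b l | a m b l. True} \<union> {fs_diff [(1, [Cen, x])] [(1, [x, Cen])] | x. True}"
  unfolding ghat_rels_def ghat_rel_def by blast

fun aff_act :: "complex \<Rightarrow> aff \<Rightarrow> neg_mode fsum \<Rightarrow> neg_mode fsum" where
  "aff_act k (Mode a m) p = mode_act k a m p"
| "aff_act k Cen p = fs_smul k p"

definition aff_act_word :: "complex \<Rightarrow> aff list \<Rightarrow> neg_mode fsum \<Rightarrow> neg_mode fsum" where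
  "aff_act_word k w p = foldr (aff_act k) w p"
lemma aff_act_word_Nil[simp]: "aff_act_word k [] p = p" by (simp add: aff_act_word_def)
lemma aff_act_word_Cons[simp]:
  "aff_act_word k (x#w) p = aff_act k x (aff_act_word k w p)"
  by (simp add: aff_act_word_def)
lemma aff_act_word_append:
  "aff_act_word k (u@w) p = aff_act_word k u (aff_act_word k w p)"
  by (simp add: aff_act_word_def)

definition aff_rep :: "complex \<Rightarrow> aff fsum \<Rightarrow> neg_mode fsum \<Rightarrow> neg_mode fsum" where
  "aff_rep k P v = fs_extend (\<lambda>w. aff_act_word k w v) P"

lemma fs_linear_aff_act: "fs_linear (aff_act k x)"
proof (cases x)
  case (Mode a m)
  have "aff_act k (Mode a m) = mode_act k a m" by (rule ext) simp
  then show ?thesis by (simp add: Mode fs_linear_mode_act)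
next
  case Cen
  have "aff_act k Cen = (\<lambda>p. fs_smul k p)" by (rule ext) simp
  then show ?thesis by (simp add: Cen fs_linear_smul[OF fs_linear_id])
qed

lemma fs_linear_aff_act_word: "fs_linear (aff_act_word k w)"
proof (induction w)
  case Nil then show ?case by (simp add: fs_linear_id)
next
  case (Cons x w)
  have "fs_linear (\<lambda>p. aff_act k x (aff_act_word k w p))"
    by (rule fs_linear_comp[OF fs_linear_aff_act Cons])
  then show ?case by simp
qed

lemma fs_linear_aff_rep: "fs_linear (aff_rep k P)"
proof (induction P)
  case Nil then show ?case by (simp add: aff_rep_def fs_linear_Nil)
next
  case (Cons x P)
  obtain c w where x: "x = (c,w)" by force
  have "fs_linear (\<lambda>v. fs_smul c (aff_act_word k w v) @ aff_rep k P v)"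
    by (rule fs_linear_append[OF fs_linear_smul[OF fs_linear_aff_act_word] Cons])
  then show ?case by (simp add: aff_rep_def x)
qed

lemma fs_linear_aff_rep_left: "fs_linear (\<lambda>P. aff_rep k P v)"
  unfolding aff_rep_def by (rule fs_linear_extend)
lemma aff_rep_coef_cong:
  "coef P = coef Q \<Longrightarrow> coef (aff_rep k P v) = coef (aff_rep k Q v)"
  unfolding aff_rep_def by (rule fs_extend_coef_cong)

lemma aff_rep_fs_mul: "coef (aff_rep k (fs_mul P Q) v) = coef (aff_rep k P (aff_rep k Q v))"
proof -
  have "coef (aff_rep k (fs_mul P Q) v) =
      coef (fs_extend (\<lambda>w. aff_act_word k w v) (fs_extend (\<lambda>u. word_mul u Q) P))"
    by (simp add: aff_rep_def fs_mul_eq_extend)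
  also have "\<dots> = coef (fs_extend (\<lambda>u. fs_extend (\<lambda>w. aff_act_word k w v) (word_mul u Q)) P)"
    by (rule fs_extend_fs_extend)
  also have "\<dots> = coef (fs_extend (\<lambda>u. aff_act_word k u (aff_rep k Q v)) P)"
  proof (rule fs_extend_cong)
    fix c u
    have "coef (fs_extend (\<lambda>w. aff_act_word k w v) (word_mul u Q))
      = coef (fs_extend (\<lambda>w. aff_act_word k u (aff_act_word k w v)) Q)"
      by (simp add: fs_extend_word_mul aff_act_word_append)
    also have "\<dots> = coef (aff_act_word k u (fs_extend (\<lambda>w. aff_act_word k w v) Q))"
      by (rule fs_linear_apply_extend[OF fs_linear_aff_act_word, symmetric])
    finally show "coef (fs_extend (\<lambda>w. aff_act_word k w v) (word_mul u Q))
      = coef (aff_act_word k u (aff_rep k Q v))"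
      by (simp add: aff_rep_def)
  qed
  also have "\<dots> = coef (aff_rep k P (aff_rep k Q v))" by (simp add: aff_rep_def)
  finally show ?thesis .
qed

lemma aff_act_vac_ideal: "p \<in> vac_ideal \<Longrightarrow> aff_act k x p \<in> vac_ideal"
  by (cases x) (simp_all add: mode_act_vac_ideal ideal_mod.smul)
lemma aff_act_word_vac_ideal:
  "p \<in> vac_ideal \<Longrightarrow> aff_act_word k w p \<in> vac_ideal"
  by (induction w) (simp_all add: aff_act_vac_ideal)
lemma aff_rep_vac_ideal: "v \<in> vac_ideal \<Longrightarrow> aff_rep k P v \<in> vac_ideal"
  unfolding aff_rep_def by (rule ideal_mod_extend) (rule aff_act_word_vac_ideal)
lemma aff_rep_fs_diff:
  "coef (aff_rep k (fs_diff P Q) v) = coef (aff_rep k P v @ fs_smul (-1) (aff_rep k Q v))"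
  by (simp add: aff_rep_def fs_diff_def fs_add_def fun_eq_iff)
lemma aff_rep_single:
  "aff_rep k [(c,w)] v = fs_smul c (aff_act_word k w v)"
  by (simp add: aff_rep_def)

lemma aff_rep_ghat_rel: "aff_rep k (ghat_rel a m b l) v \<in> vac_ideal"
proof (rule ideal_mod.coef_eq[OF mode_act_commutator])
  have "coef (aff_rep k (map (\<lambda>(c, x). (c, [Mode x (m + l)])) (sl2_bracket a b)) v) =
      coef (basis_sum (\<lambda>z. fs_smul (bracket_coef a b z) (mode_act k z (m+l) v)))"
    using aff_rep_coef_cong[OF coef_bracket_map[of "\<lambda>x. [Mode x (m+l)]" a b], of k v]
    by (simp add: aff_rep_def basis_sum_def)
  then show "coef (aff_rep k (ghat_rel a m b l) v) =
      coef (mode_act k a m (mode_act k b l v) @ fs_smul (-1) (mode_act k b l (mode_act k a m v))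
        @ fs_smul (-1) (bracket_act k a m b l v))"
    by (simp add: ghat_rel_def aff_rep_fs_diff[unfolded fun_eq_iff] aff_rep_single bracket_act_def
        central_coef_def fun_eq_iff algebra_simps)
qed

lemma aff_rep_ghat_rels: "t \<in> ghat_rels \<Longrightarrow> aff_rep k t v \<in> vac_ideal"
proof (unfold ghat_rels_eq, elim UnE CollectE exE conjE)
  fix a b m l assume "t = ghat_rel a m b l"
  then show "aff_rep k t v \<in> vac_ideal" by (simp only: aff_rep_ghat_rel)
next
  fix x assume t: "t = fs_diff [(1, [Cen, x])] [(1, [x, Cen])]"
  have "coef (aff_rep k t v) = coef []"
    using fs_linear_apply_smul[OF fs_linear_aff_act, of k x k v]
    by (simp add: t aff_rep_fs_diff[unfolded fun_eq_iff] aff_rep_single fun_eq_iff)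
  then show "aff_rep k t v \<in> vac_ideal" by (rule ideal_mod_zero_coef)
qed

lemma aff_rep_M_ideal:
  "P \<in> ideal_mod ghat_rels (M_left k) \<Longrightarrow> aff_rep k P [(1,[])] \<in> vac_ideal"
proof (erule ideal_mod_linear_image[OF _ fs_linear_aff_rep_left])
  fix l t r assume t: "t \<in> ghat_rels"
  have "coef (aff_rep k (fs_mul (fs_mul l t) r) [(1,[])]) =
      coef (aff_rep k l (aff_rep k t (aff_rep k r [(1,[])])))"
    by (metis aff_rep_fs_mul)
  moreover have "aff_rep k l (aff_rep k t (aff_rep k r [(1,[])])) \<in> vac_ideal"
    by (rule aff_rep_vac_ideal) (rule aff_rep_ghat_rels[OF t])
  ultimately show "aff_rep k (fs_mul (fs_mul l t) r) [(1,[])] \<in> vac_ideal"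
    by (rule ideal_mod.coef_eq[rotated])
next
  fix l x assume "x \<in> M_left k"
  then have z: "coef (aff_rep k x [(1,[])]) = coef []"
    unfolding M_left_def
  proof (elim UnE CollectE exE conjE)
    fix a m assume x: "x = fs_gen (Mode a m)" and m: "0 \<le> m"
    show ?thesis using m by (simp add: x fs_gen_def aff_rep_def mode_act_def pos_act_single fun_eq_iff)
  next
    assume "x \<in> {[(1, [Cen]), (- k, [])]}"
    then show ?thesis by (simp add: aff_rep_def fun_eq_iff)
  qed
  have "coef (aff_rep k (fs_mul l x) [(1,[])]) = coef (aff_rep k l (aff_rep k x [(1,[])]))"
    by (rule aff_rep_fs_mul)
  also have "\<dots> = coef []" by (rule fs_linear_apply_zero[OF fs_linear_aff_rep z])
  finally show "aff_rep k (fs_mul l x) [(1,[])] \<in> vac_ideal" by (rule ideal_mod_zero_coef)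
qed

section \<open>From the vacuum module to U(g)\<close>

text \<open>The sign makes b(-i-1) \<mapsto> (-1)^(i+1) b an algebra homomorphism.\<close>
definition word_sign :: "neg_mode list \<Rightarrow> complex" where
  "word_sign w = (-1) ^ (length w + sum_list (map snd w))"
lemma word_sign_append: "word_sign (v @ w) = word_sign v * word_sign w"
  by (simp add: word_sign_def power_add algebra_simps)
lemma word_sign_Cons: "word_sign ((b,i)#w) = (-1)^(Suc i) * word_sign w"
  by (simp add: word_sign_def power_add algebra_simps)

definition to_Ug :: "neg_mode fsum \<Rightarrow> sl2b fsum" where
  "to_Ug p = fs_extend (\<lambda>w. [(word_sign w, map fst w)]) p"
lemma fs_linear_to_Ug: "fs_linear to_Ug" unfolding to_Ug_def[abs_def] by (rule fs_linear_extend)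
lemma to_Ug_append[simp]: "to_Ug (p @ q) = to_Ug p @ to_Ug q" by (simp add: to_Ug_def)
lemma to_Ug_single: "to_Ug [(c,w)] = [(c * word_sign w, map fst w)]" by (simp add: to_Ug_def)
lemma to_Ug_Cons[simp]:
  "to_Ug ((c,w)#p) = (c * word_sign w, map fst w) # to_Ug p"
  by (simp add: to_Ug_def)
lemma coef_to_Ug_smul[simp]: "coef (to_Ug (fs_smul a p)) u = a * coef (to_Ug p) u"
  by (simp add: to_Ug_def)
lemma to_Ug_Nil[simp]: "to_Ug [] = []" by (simp add: to_Ug_def)

lemma to_Ug_word_mul:
  "coef (to_Ug (word_mul v q)) = coef (fs_smul (word_sign v) (word_mul (map fst v) (to_Ug q)))"
proof -
  have "to_Ug (word_mul v q) = fs_extend (\<lambda>w. [(word_sign (v@w), map fst (v@w))]) q"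
    by (simp add: to_Ug_def fs_extend_word_mul)
  also have "coef \<dots> =
      coef (fs_extend (\<lambda>w. fs_smul (word_sign v) (word_mul (map fst v) [(word_sign w, map fst w)])) q)"
    by (rule fs_extend_cong) (simp add: word_sign_append fun_eq_iff)
  also have "\<dots> = coef (fs_smul (word_sign v) (word_mul (map fst v) (to_Ug q)))"
    unfolding to_Ug_def
    by (rule fs_linear_apply_extend[OF fs_linear_smul[OF fs_linear_word_mul], symmetric])
  finally show ?thesis .
qed

lemma to_Ug_fs_mul: "coef (to_Ug (fs_mul p q)) = coef (fs_mul (to_Ug p) (to_Ug q))"
proof -
  have "coef (to_Ug (fs_mul p q)) = coef (fs_extend (\<lambda>v. to_Ug (word_mul v q)) p)"
    unfolding fs_mul_eq_extend by (rule fs_linear_apply_extend[OF fs_linear_to_Ug])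
  also have "\<dots> = coef (fs_extend (\<lambda>v. fs_smul (word_sign v) (word_mul (map fst v) (to_Ug q))) p)"
    by (rule fs_extend_cong) (rule to_Ug_word_mul)
  also have "\<dots> =
      coef (fs_extend (\<lambda>v. fs_extend (\<lambda>v'. word_mul v' (to_Ug q)) [(word_sign v, map fst v)]) p)"
    by (rule fs_extend_cong) (simp add: fun_eq_iff)
  also have "\<dots> = coef (fs_extend (\<lambda>v'. word_mul v' (to_Ug q)) (to_Ug p))"
    unfolding to_Ug_def by (rule fs_extend_fs_extend[symmetric])
  also have "\<dots> = coef (fs_mul (to_Ug p) (to_Ug q))" by (simp add: fs_mul_eq_extend)
  finally show ?thesis .
qed

abbreviation Ug_ideal where "Ug_ideal \<equiv> ideal_mod Ug_rels {}"

definition Ug_rel :: "sl2b \<Rightarrow> sl2b \<Rightarrow> sl2b fsum" where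
  "Ug_rel a b = [(1,[a,b])] @ [(-1,[b,a])] @ fs_smul (-1) (basis_sum (\<lambda>z. [(bracket_coef a b z, [z])]))"

lemma Ug_rel_mul_in_ideal: "fs_mul (fs_mul l (Ug_rel a b)) r \<in> Ug_ideal"
proof (rule ideal_mod.coef_eq)
  let ?t = "fs_diff (fs_diff [(1, [a, b])] [(1, [b, a])]) (fs_lin (sl2_bracket a b))"
  show "fs_mul (fs_mul l ?t) r \<in> Ug_ideal"
    by (rule ideal_mod.two_sided) (auto simp: Ug_rels_def)
  have "coef (Ug_rel a b) = coef ?t"
    by (simp add: Ug_rel_def fun_eq_iff coef_fs_lin_bracket[unfolded fun_eq_iff])
  then show "coef (fs_mul (fs_mul l (Ug_rel a b)) r) = coef (fs_mul (fs_mul l ?t) r)"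
    by (intro fs_mul_cong1 fs_mul_cong2)
qed

lemma to_Ug_vac_rel: "coef (to_Ug (vac_rel (a,i) (b,j))) = coef (fs_smul ((-1)^(i+j)) (Ug_rel a b))"
proof -
  have s2: "word_sign [(a,i),(b,j)] = (-1)^(i+j)" "word_sign [(b,j),(a,i)] = (-1)^(i+j)"
    "\<And>z. word_sign [(z, Suc (i+j))] = (-1)^(i+j)"
    by (simp_all add: word_sign_def power_add algebra_simps)
  show ?thesis
    by (simp add: Ug_rel_def to_Ug_def basis_sum_def s2 fun_eq_iff algebra_simps)
qed

lemma to_Ug_vac_ideal: "p \<in> vac_ideal \<Longrightarrow> to_Ug p \<in> Ug_ideal"
proof (erule ideal_mod_linear_image[OF _ fs_linear_to_Ug])
  fix l t r assume "t \<in> vac_rels"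
  then obtain a i b j where t: "t = vac_rel (a,i) (b,j)" unfolding vac_rels_def by auto
  define s :: complex where "s = (-1)^(i+j)"
  have "coef (to_Ug (fs_mul (fs_mul l t) r)) = coef (fs_mul (fs_mul (to_Ug l) (to_Ug t)) (to_Ug r))"
    by (metis to_Ug_fs_mul fs_mul_cong1)
  also have "\<dots> = coef (fs_mul (fs_mul (to_Ug l) (fs_smul s (Ug_rel a b))) (to_Ug r))"
    unfolding t s_def by (rule fs_mul_cong1[OF fs_mul_cong2[OF to_Ug_vac_rel]])
  also have "\<dots> = coef (fs_smul s (fs_mul (fs_mul (to_Ug l) (Ug_rel a b)) (to_Ug r)))"
    by (metis fs_mul_cong1 fs_mul_smul1 fs_mul_smul2)
  finally show "to_Ug (fs_mul (fs_mul l t) r) \<in> Ug_ideal"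
    by (rule ideal_mod.coef_eq[rotated]) (intro ideal_mod.smul Ug_rel_mul_in_ideal)
qed simp

lemma ug_transpose_append[simp]: "ug_transpose (p @ q) = ug_transpose p @ ug_transpose q"
  by (simp add: ug_transpose_def)
lemma ug_transpose_Nil[simp]: "ug_transpose [] = []" by (simp add: ug_transpose_def)
lemma ug_transpose_Cons[simp]:
  "ug_transpose ((c,w)#p) = ((-1)^length w * c, rev w) # ug_transpose p"
  by (simp add: ug_transpose_def)
lemma coef_ug_transpose_smul[simp]:
  "coef (ug_transpose (fs_smul a p)) u = a * coef (ug_transpose p) u"
  by (induction p) (auto simp: algebra_simps)
lemma ug_transpose_eq_extend:
  "coef (ug_transpose p) = coef (fs_extend (\<lambda>w. [((-1)^length w, rev w)]) p)"
  by (induction p) (auto simp: fun_eq_iff)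

lemma fs_linear_ug_transpose: "fs_linear ug_transpose"
  unfolding fs_linear_def
proof
  fix p :: "sl2b fsum"
  show "coef (ug_transpose p) = coef (fs_extend (\<lambda>w. ug_transpose [(1, w)]) p)"
    using ug_transpose_eq_extend[of p] by (simp add: fun_eq_iff fs_extend_cong)
qed

lemma ug_transpose_word_mul:
  "coef (ug_transpose (word_mul v q)) = coef (fs_mul (ug_transpose q) [((-1)^length v, rev v)])"
  by (induction q) (auto simp: fun_eq_iff power_add algebra_simps)

lemma ug_transpose_fs_mul:
  "coef (ug_transpose (fs_mul p q)) = coef (fs_mul (ug_transpose q) (ug_transpose p))"
proof (induction p)
  case Nil then show ?case by (simp add: fs_linear_apply_Nil[OF fs_linear_fs_mul_right])
next
  case (Cons x p)
  obtain c v where x: "x = (c,v)" by force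
  have "coef (fs_mul (ug_transpose q) (ug_transpose (x#p))) =
        coef (fs_mul (ug_transpose q) [((-1)^length v * c, rev v)] @
          fs_mul (ug_transpose q) (ug_transpose p))"
    using fs_linear_apply_append[OF fs_linear_fs_mul_right,
        of "ug_transpose q" "[((-1)^length v * c, rev v)]" "ug_transpose p"]
    by (simp add: x)
  moreover have "coef (fs_mul (ug_transpose q) [((-1)^length v * c, rev v)]) =
      coef (fs_smul c (fs_mul (ug_transpose q) [((-1)^length v, rev v)]))"
    using fs_linear_apply_smul[OF fs_linear_fs_mul_right, of "ug_transpose q" c "[((-1)^length v, rev v)]"]
    by (simp add: algebra_simps)
  ultimately show ?case using Cons ug_transpose_word_mul[of v q] by (simp add: x fun_eq_iff)
qed

lemma ug_transpose_Ug_ideal: "p \<in> Ug_ideal \<Longrightarrow> ug_transpose p \<in> Ug_ideal"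
proof (erule ideal_mod_linear_image[OF _ fs_linear_ug_transpose])
  fix l t r assume t_in: "t \<in> Ug_rels"
  then obtain x y where t: "t = fs_diff (fs_diff [(1, [x, y])] [(1, [y, x])]) (fs_lin (sl2_bracket x y))"
    unfolding Ug_rels_def by blast
  have tt: "coef (ug_transpose t) = coef (fs_smul (-1) t)"
    unfolding t
    by (cases x; cases y) (simp_all add: fs_diff_def fs_add_def fs_lin_def fun_eq_iff)
  have "coef (ug_transpose (fs_mul (fs_mul l t) r)) =
      coef (fs_mul (fs_mul (ug_transpose r) (ug_transpose t)) (ug_transpose l))"
    by (metis fs_mul_assoc fs_mul_cong2 ug_transpose_fs_mul)
  also have "\<dots> = coef (fs_mul (fs_mul (ug_transpose r) (fs_smul (-1) t)) (ug_transpose l))"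
    by (rule fs_mul_cong1[OF fs_mul_cong2[OF tt]])
  also have "\<dots> = coef (fs_smul (-1) (fs_mul (fs_mul (ug_transpose r) t) (ug_transpose l)))"
    by (metis fs_mul_cong1 fs_mul_smul1 fs_mul_smul2)
  finally show "ug_transpose (fs_mul (fs_mul l t) r) \<in> Ug_ideal"
    by (rule ideal_mod.coef_eq[rotated]) (intro ideal_mod.smul ideal_mod.two_sided t_in)
qed simp

definition neg_mode_of :: "aff \<Rightarrow> neg_mode" where
  "neg_mode_of x = (aff_base x, nat (- aff_mode x - 1))"

lemma aff_act_neg_word:
  "neg_word w \<Longrightarrow> aff_act_word k w [(1,[])] = [(1, map neg_mode_of w)]"
proof (induction w)
  case Nil then show ?case by simp
next
  case (Cons x w)
  then obtain a m where x: "x = Mode a m" "m \<le> -1" and nw: "neg_word w" by (auto simp: neg_word_def)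
  show ?case using Cons.IH[OF nw] x by (simp add: mode_act_def neg_mode_of_def)
qed

lemma to_Ug_neg_words:
  "(\<forall>(c, w)\<in>set p. neg_word w) \<Longrightarrow>
    coef (to_Ug (aff_rep k p [(1,[])])) = coef (ug_transpose (F_mono p))"
proof (induction p)
  case Nil then show ?case by (simp add: aff_rep_def F_mono_def)
next
  case (Cons x p)
  obtain c w where x: "x = (c,w)" by force
  have nw: "neg_word w" using Cons.prems x by auto
  have IH: "coef (to_Ug (aff_rep k p [(1,[])])) = coef (ug_transpose (F_mono p))" using Cons by auto
  have s: "word_sign (map neg_mode_of w) =
      (-1) ^ length w * (-1) ^ (\<Sum>x\<leftarrow>w. nat (- aff_mode x - 1))"
    by (simp add: word_sign_def neg_mode_of_def power_add o_def)
  have f: "fst \<circ> neg_mode_of = aff_base" by (rule ext) (simp add: neg_mode_of_def)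
  show ?case using IH
    by (simp add: x aff_rep_def aff_act_neg_word[OF nw] F_mono_def to_Ug_def s f fun_eq_iff
        algebra_simps)
qed

section \<open>Vectors g.1 with g in U(nhat_-)\<close>

definition Ug_commutator :: "sl2b \<Rightarrow> sl2b fsum \<Rightarrow> sl2b fsum" where
  "Ug_commutator a L = fs_mul [(1,[a])] L @ fs_smul (-1) (fs_mul L [(1,[a])])"

lemma to_Ug_pos_act_word_zero:
  "cong_mod Ug_rels {} (to_Ug (pos_act_word k a 0 w)) (Ug_commutator a (to_Ug [(1,w)]))"
proof (induction w)
  case Nil
  show ?case
    by (rule cong_mod_coefI) (simp add: Ug_commutator_def to_Ug_single fun_eq_iff word_sign_def)
next
  case (Cons x w)
  obtain b i where x: "x = (b,i)" by force
  define X where "X = to_Ug (pos_act_word k a 0 w)"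
  define s' where "s' = word_sign w"
  define t :: complex where "t = (-1)^(Suc i)"
  define w0 where "w0 = map fst w"
  have L': "to_Ug [(1,w)] = [(s', w0)]" by (simp add: to_Ug_single s'_def w0_def)
  have E2: "fs_mul [(1,[b])] (fs_diff X (Ug_commutator a [(s', w0)])) \<in> Ug_ideal"
    using Cons unfolding L' X_def cong_mod_def by (rule ideal_mod_mul_left)
  have E1: "fs_mul (fs_mul [(1,[])] (Ug_rel a b)) [(s', w0)] \<in> Ug_ideal"
    by (rule Ug_rel_mul_in_ideal)
  have D: "pos_act_word k a 0 ((b,i)#w) =
      basis_sum (\<lambda>z. [(bracket_coef a b z, (z, i) # w)]) @ word_mul [(b,i)] (pos_act_word k a 0 w)"
    by simp
  have lr: "coef (to_Ug (word_mul [(b,i)] (pos_act_word k a 0 w))) = coef (fs_smul t (word_mul [b] X))"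
    using to_Ug_word_mul[of "[(b,i)]" "pos_act_word k a 0 w"] by (simp add: X_def t_def word_sign_def)
  have sg: "\<And>z. word_sign ((z,i)#w) = t * s'" by (simp add: word_sign_Cons t_def s'_def)
  have "coef (fs_diff (to_Ug (pos_act_word k a 0 (x#w))) (Ug_commutator a (to_Ug [(1, x#w)]))) =
        coef (fs_smul t (fs_mul [(1,[b])] (fs_diff X (Ug_commutator a [(s', w0)]))) @
          fs_smul (-t) (fs_mul (fs_mul [(1,[])] (Ug_rel a b)) [(s', w0)]))"
    unfolding x D using lr
    by (simp add: to_Ug_def[of "basis_sum _"] basis_sum_def sg to_Ug_single Ug_commutator_def
        Ug_rel_def fs_diff_def fs_add_def fs_mul_smul1 w0_def s'_def fun_eq_iff algebra_simps)
  moreover have "fs_smul t (fs_mul [(1,[b])] (fs_diff X (Ug_commutator a [(s', w0)])))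
      @ fs_smul (-t) (fs_mul (fs_mul [(1,[])] (Ug_rel a b)) [(s', w0)]) \<in> Ug_ideal"
    by (intro ideal_mod_append ideal_mod.smul E1 E2)
  ultimately show ?case unfolding cong_mod_def by (rule ideal_mod.coef_eq[rotated])
qed

abbreviation Ug_nminus_ideal where "Ug_nminus_ideal \<equiv> ideal_mod Ug_rels {fs_gen sF}"

lemma fs_linear_Ug_commutator_to_Ug: "fs_linear (\<lambda>V. Ug_commutator a (to_Ug V))"
  unfolding Ug_commutator_def
  by (rule fs_linear_append[OF fs_linear_comp[OF fs_linear_fs_mul_right fs_linear_to_Ug]
    fs_linear_smul[OF fs_linear_comp[OF fs_linear_fs_mul_left fs_linear_to_Ug]]])

lemma to_Ug_pos_act_zero:
  "cong_mod Ug_rels {} (to_Ug (pos_act k a 0 V)) (Ug_commutator a (to_Ug V))"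
proof -
  have X: "coef (to_Ug (pos_act k a 0 V)) = coef (fs_extend (\<lambda>w. to_Ug (pos_act_word k a 0 w)) V)"
    unfolding pos_act_def by (rule fs_linear_apply_extend[OF fs_linear_to_Ug])
  have Y: "cong_mod Ug_rels {} (fs_extend (\<lambda>w. to_Ug (pos_act_word k a 0 w)) V)
      (fs_extend (\<lambda>w. Ug_commutator a (to_Ug [(1,w)])) V)"
    by (rule cong_mod_extend) (rule to_Ug_pos_act_word_zero)
  have Z: "coef (Ug_commutator a (to_Ug V)) =
      coef (fs_extend (\<lambda>w. Ug_commutator a (to_Ug [(1,w)])) V)"
    by (rule fs_linearD[OF fs_linear_Ug_commutator_to_Ug])
  show ?thesis by (rule cong_mod_coef_subst[OF X Z Y])
qed

definition emb_word :: "(sl2b \<times> nat) list \<Rightarrow> aff list" where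
  "emb_word w = map (\<lambda>(a,i). Mode a (- int i)) w"
lemma emb_eq_extend: "emb g = fs_extend (\<lambda>w. [(1, emb_word w)]) g"
  by (induction g) (auto simp: emb_def emb_word_def)
lemma aff_rep_emb: "aff_rep k (emb g) v = fs_extend (\<lambda>w. aff_act_word k (emb_word w) v) g"
  by (induction g) (auto simp: emb_def emb_word_def aff_rep_def)
lemma mode_act_neg: "0 < i \<Longrightarrow> mode_act k a (- int i) V = word_mul [(a, i - 1)] V"
  by (simp add: mode_act_def nat_diff_distrib')

lemma to_Ug_neg_mode_mul:
  "coef (to_Ug (word_mul [(a, i)] V)) = coef (fs_smul ((-1)^Suc i) (fs_mul [(1,[a])] (to_Ug V)))"
  using to_Ug_word_mul[of "[(a,i)]" V] coef_word_mul_eq_fs_mul[of "[a]" "to_Ug V"]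
  by (simp add: word_sign_def fun_eq_iff del: fs_mul_Cons)

lemma to_Ug_pos_act_f_zero:
  "cong_mod Ug_rels {fs_gen sF} (to_Ug (pos_act k sF 0 V)) (fs_mul [(1,[sF])] (to_Ug V))"
proof (rule cong_mod_trans[OF cong_mod_mono[OF to_Ug_pos_act_zero]])
  have "fs_smul (-1) (fs_mul (to_Ug V) (fs_gen sF)) \<in> Ug_nminus_ideal"
    by (intro ideal_mod.smul ideal_mod.left) simp
  then show "cong_mod Ug_rels {fs_gen sF} (Ug_commutator sF (to_Ug V)) (fs_mul [(1,[sF])] (to_Ug V))"
    unfolding cong_mod_def
    by (rule ideal_mod.coef_eq)
      (simp add: Ug_commutator_def fs_gen_def fs_diff_def fs_add_def fun_eq_iff)
qed

lemma to_Ug_emb_word: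
  "(\<forall>x\<in>set w. nminus_gen x) \<Longrightarrow>
   cong_mod Ug_rels {fs_gen sF} (to_Ug (aff_act_word k (emb_word w) [(1,[])]))
     [((-1)^(ndeg w), map fst w)]"
proof (induction w)
  case Nil
  show ?case
    by (rule cong_mod_coefI) (simp add: emb_word_def ndeg_def to_Ug_single word_sign_def fun_eq_iff)
next
  case (Cons x w)
  obtain a i where x: "x = (a,i)" by force
  define V where "V = aff_act_word k (emb_word w) [(1,[])]"
  define s :: complex where "s = (-1)^(ndeg w)"
  have IH: "cong_mod Ug_rels {fs_gen sF} (to_Ug V) [(s, map fst w)]"
    using Cons unfolding V_def s_def by simp
  have act: "aff_act_word k (emb_word (x#w)) [(1,[])] = mode_act k a (- int i) V"
    by (simp add: emb_word_def x V_def)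
  show ?case
  proof (cases "i = 0")
    case False
    have X: "coef (to_Ug (mode_act k a (- int i) V))
      = coef (fs_smul ((-1)^i) (fs_mul [(1,[a])] (to_Ug V)))"
      using False to_Ug_neg_mode_mul[of a "i - 1" V] by (simp add: mode_act_neg)
    have Y: "cong_mod Ug_rels {fs_gen sF} (fs_smul ((-1)^i) (fs_mul [(1,[a])] (to_Ug V)))
        (fs_smul ((-1)^i) (fs_mul [(1,[a])] [(s, map fst w)]))"
      by (intro cong_mod_smul cong_mod_mul_left IH)
    have Z: "coef [((-1)^(ndeg (x#w)), map fst (x#w))]
      = coef (fs_smul ((-1)^i) (fs_mul [(1,[a])] [(s, map fst w)]))"
      by (simp add: s_def x ndeg_def power_add fun_eq_iff algebra_simps)
    show ?thesis unfolding act by (rule cong_mod_coef_subst[OF X Z Y])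
  next
    case True
    then have a: "a = sF" using Cons.prems by (simp add: x nminus_gen_def)
    have "cong_mod Ug_rels {fs_gen sF} (to_Ug (pos_act k sF 0 V)) (fs_mul [(1,[sF])] [(s, map fst w)])"
      by (rule cong_mod_trans[OF to_Ug_pos_act_f_zero cong_mod_mul_left[OF IH]])
    moreover have "coef [((-1)^(ndeg (x#w)), map fst (x#w))]
      = coef (fs_mul [(1,[sF])] [(s, map fst w)])"
      by (simp add: s_def x a True fun_eq_iff ndeg_def)
    ultimately show ?thesis
      unfolding act using True by (simp add: a mode_act_def cong_mod_coef_subst[OF refl])
  qed
qed

lemma to_Ug_emb:
  assumes "\<forall>(c, w)\<in>set g. \<forall>x\<in>set w. nminus_gen x" and "\<forall>(c, w)\<in>set g. ndeg w = n"
  shows "cong_mod Ug_rels {fs_gen sF} (to_Ug (aff_rep k (emb g) [(1,[])])) (fs_smul ((-1)^n) (eps g))"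
proof -
  have X: "coef (to_Ug (aff_rep k (emb g) [(1,[])]))
    = coef (fs_extend (\<lambda>w. to_Ug (aff_act_word k (emb_word w) [(1,[])])) g)"
    unfolding aff_rep_emb by (rule fs_linear_apply_extend[OF fs_linear_to_Ug])
  have Y: "cong_mod Ug_rels {fs_gen sF} (fs_extend (\<lambda>w. to_Ug (aff_act_word k (emb_word w) [(1,[])])) g)
      (fs_extend (\<lambda>w. [((-1)^(ndeg w), map fst w)]) g)"
  proof (rule cong_mod_extend)
    fix c w assume "(c,w) \<in> set g"
    then have "\<forall>x\<in>set w. nminus_gen x" using assms(1) by auto
    then show "cong_mod Ug_rels {fs_gen sF} (to_Ug (aff_act_word k (emb_word w) [(1,[])]))
        [((-1)^(ndeg w), map fst w)]"
      by (rule to_Ug_emb_word)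
  qed
  have Z1: "coef (fs_extend (\<lambda>w. [((-1)^(ndeg w), map fst w)]) g)
    = coef (fs_extend (\<lambda>w. [((-1::complex)^n, map fst w)]) g)"
    by (rule fs_extend_cong) (use assms(2) in auto)
  have Z2: "coef (fs_extend (\<lambda>w. [((-1::complex)^n, map fst w)]) g)
    = coef (fs_smul ((-1)^n) (eps g))"
    by (induction g) (auto simp: eps_def fun_eq_iff algebra_simps)
  show ?thesis by (rule cong_mod_coef_subst[OF X _ Y]) (simp add: Z1 Z2)
qed

section \<open>Representatives in M(k,0)\<close>

definition neg_word_of :: "neg_mode list \<Rightarrow> aff list" where
  "neg_word_of w = map (\<lambda>(b,i). Mode b (- int i - 1)) w"

definition neg_emb :: "neg_mode fsum \<Rightarrow> aff fsum" where
  "neg_emb p = map (\<lambda>(c,w). (c, neg_word_of w)) p"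
lemma neg_emb_append[simp]: "neg_emb (p @ q) = neg_emb p @ neg_emb q" by (simp add: neg_emb_def)
lemma neg_emb_Nil[simp]: "neg_emb [] = []" by (simp add: neg_emb_def)
lemma neg_emb_Cons[simp]:
  "neg_emb ((c,w)#p) = (c, neg_word_of w) # neg_emb p"
  by (simp add: neg_emb_def)
lemma neg_emb_smul[simp]: "neg_emb (fs_smul a p) = fs_smul a (neg_emb p)" by (induction p) auto
lemma neg_emb_extend:
  "neg_emb (fs_extend f p) = fs_extend (\<lambda>w. neg_emb (f w)) p"
  by (induction p) auto
lemma neg_emb_basis_sum[simp]:
  "neg_emb (basis_sum F) = basis_sum (\<lambda>z. neg_emb (F z))"
  by (simp add: basis_sum_def)
lemma neg_emb_word_mul: "neg_emb (word_mul [(b,i)] p) = word_mul [Mode b (- int i - 1)] (neg_emb p)"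
  by (induction p) (auto simp: neg_word_of_def)
lemma neg_word_of_Cons[simp]:
  "neg_word_of ((b,i)#w) = Mode b (- int i - 1) # neg_word_of w"
  by (simp add: neg_word_of_def)
lemma neg_word_of_Nil[simp]: "neg_word_of [] = []" by (simp add: neg_word_of_def)
lemma neg_emb_eq_extend: "coef (neg_emb p) = coef (fs_extend (\<lambda>w. [(1, neg_word_of w)]) p)"
  by (induction p) (auto simp: fun_eq_iff)

abbreviation M_ideal where "M_ideal k \<equiv> ideal_mod ghat_rels (M_left k)"

lemma ghat_rel_in_ghat_rels: "ghat_rel a m b l \<in> ghat_rels"
  unfolding ghat_rels_eq by blast

lemma M_ideal_ghat_rel_mul: "t \<in> ghat_rels \<Longrightarrow> fs_mul t X \<in> M_ideal k"
proof -
  assume "t \<in> ghat_rels"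
  then have "fs_mul (fs_mul [(1,[])] t) X \<in> M_ideal k" by (rule ideal_mod.two_sided)
  then show ?thesis by (rule ideal_mod.coef_eq) (rule fs_mul_cong1[OF fs_mul_one1[symmetric]])
qed

lemma pos_act_word_zero_M_eq:
  "cong_mod ghat_rels (M_left k)
    (fs_mul [(1,[Mode a 0])] [(1, neg_word_of w)]) (neg_emb (pos_act_word k a 0 w))"
proof (induction w)
  case Nil
  have "fs_mul [(1,[])] (fs_gen (Mode a 0)) \<in> M_ideal k"
    by (rule ideal_mod.left) (auto simp: M_left_def)
  then show ?case unfolding cong_mod_def
    by (rule ideal_mod.coef_eq) (simp add: fs_gen_def fun_eq_iff)
next
  case (Cons x w)
  obtain b i where x: "x = (b,i)" by force
  define l where "l = - int i - 1"
  define W where "W = neg_word_of w"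
  have l0: "(0::int) + l \<noteq> 0" "l \<noteq> 0" by (auto simp: l_def)
  define R where "R = fs_mul (ghat_rel a 0 b l) [(1,W)]
      @ fs_mul [(1,[Mode b l])] (fs_diff (fs_mul [(1,[Mode a 0])] [(1, W)]) (neg_emb (pos_act_word k a 0 w)))"
  have "R \<in> M_ideal k"
    unfolding R_def
  proof (rule ideal_mod_append)
    show "fs_mul (ghat_rel a 0 b l) [(1,W)] \<in> M_ideal k"
      by (rule M_ideal_ghat_rel_mul[OF ghat_rel_in_ghat_rels])
    show "fs_mul [(1,[Mode b l])] (fs_diff (fs_mul [(1,[Mode a 0])] [(1, W)]) (neg_emb (pos_act_word k a 0 w)))
      \<in> M_ideal k"
      using Cons unfolding cong_mod_def W_def by (rule ideal_mod_mul_left)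
  qed
  moreover have "coef (fs_mul (map (\<lambda>(c, x). (c, [Mode x l])) (sl2_bracket a b)) [(1,W)]) =
      coef (basis_sum (\<lambda>z. [(bracket_coef a b z, Mode z l # W)]))"
    using fs_mul_cong1[OF coef_bracket_map, of "\<lambda>x. [Mode x l]" a b "[(1,W)]"]
    by (simp add: basis_sum_def fun_eq_iff)
  then have "coef (fs_diff (fs_mul [(1,[Mode a 0])] [(1, neg_word_of (x#w))])
      (neg_emb (pos_act_word k a 0 (x#w)))) = coef R"
    by (simp add: x R_def ghat_rel_def l0 neg_emb_word_mul fs_diff_def fs_add_def fs_mul_smul1
        W_def[symmetric] l_def[symmetric] fun_eq_iff word_mul_smul)
  ultimately show ?case unfolding cong_mod_def by (rule ideal_mod.coef_eq)
qed

lemma pos_act_zero_M_eq: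
  "cong_mod ghat_rels (M_left k) (fs_mul [(1,[Mode a 0])] (neg_emb V)) (neg_emb (pos_act k a 0 V))"
proof -
  have X: "coef (fs_mul [(1,[Mode a 0])] (neg_emb V))
    = coef (fs_extend (\<lambda>w. fs_mul [(1,[Mode a 0])] [(1, neg_word_of w)]) V)"
  proof -
    have "coef (fs_mul [(1,[Mode a 0])] (neg_emb V))
      = coef (fs_mul [(1,[Mode a 0])] (fs_extend (\<lambda>w. [(1, neg_word_of w)]) V))"
      by (rule fs_mul_cong2[OF neg_emb_eq_extend])
    also have "\<dots> = coef (fs_extend (\<lambda>w. fs_mul [(1,[Mode a 0])] [(1, neg_word_of w)]) V)"
      by (rule fs_linear_apply_extend[OF fs_linear_fs_mul_right])
    finally show ?thesis .
  qed
  have Z: "neg_emb (pos_act k a 0 V) = fs_extend (\<lambda>w. neg_emb (pos_act_word k a 0 w)) V"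
    by (simp add: pos_act_def neg_emb_extend)
  have Y: "cong_mod ghat_rels (M_left k) (fs_extend (\<lambda>w. fs_mul [(1,[Mode a 0])] [(1, neg_word_of w)]) V)
      (fs_extend (\<lambda>w. neg_emb (pos_act_word k a 0 w)) V)"
    by (rule cong_mod_extend) (rule pos_act_word_zero_M_eq)
  show ?thesis unfolding Z by (rule cong_mod_coef_subst[OF X refl Y])
qed

lemma M_eq_emb_word:
  "(\<forall>x\<in>set w. nminus_gen x) \<Longrightarrow>
   cong_mod ghat_rels (M_left k) [(1, emb_word w)] (neg_emb (aff_act_word k (emb_word w) [(1,[])]))"
proof (induction w)
  case Nil
  show ?case by (simp add: emb_word_def cong_mod_refl)
next
  case (Cons x w)
  obtain a i where x: "x = (a,i)" by force
  define V where "V = aff_act_word k (emb_word w) [(1,[])]"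
  have IH: "cong_mod ghat_rels (M_left k) [(1, emb_word w)] (neg_emb V)"
    using Cons unfolding V_def by simp
  have act: "aff_act_word k (emb_word (x#w)) [(1,[])] = mode_act k a (- int i) V"
    by (simp add: emb_word_def x V_def)
  have e1: "coef [(1, emb_word (x#w))] = coef (fs_mul [(1,[Mode a (- int i)])] [(1, emb_word w)])"
    by (simp add: emb_word_def x fun_eq_iff)
  have c1: "cong_mod ghat_rels (M_left k)
      (fs_mul [(1,[Mode a (- int i)])] [(1, emb_word w)]) (fs_mul [(1,[Mode a (- int i)])] (neg_emb V))"
    by (rule cong_mod_mul_left[OF IH])
  have c2: "cong_mod ghat_rels (M_left k)
      (fs_mul [(1,[Mode a (- int i)])] (neg_emb V)) (neg_emb (mode_act k a (- int i) V))"
  proof (cases "i = 0")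
    case False
    have o: "mode_act k a (- int i) V = word_mul [(a, i - 1)] V" using False by (simp add: mode_act_neg)
    have m: "- int (i - 1) - 1 = - int i" using False by simp
    show ?thesis unfolding o neg_emb_word_mul m
      by (rule cong_mod_coefI) (rule coef_word_mul_eq_fs_mul[symmetric])
  next
    case True
    then have a: "a = sF" using Cons.prems by (simp add: x nminus_gen_def)
    have o: "mode_act k a (- int i) V = pos_act k sF 0 V" using True by (simp add: mode_act_def a)
    show ?thesis unfolding o using pos_act_zero_M_eq[of k sF V] by (simp add: a True)
  qed
  show ?case unfolding act
    by (rule cong_mod_trans[OF cong_mod_coefI[OF e1] cong_mod_trans[OF c1 c2]])
qed

lemma M_eq_emb:
  assumes "\<forall>(c, w)\<in>set g. \<forall>x\<in>set w. nminus_gen x"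
  shows "M_eq k (emb g) (neg_emb (aff_rep k (emb g) [(1,[])]))"
proof -
  have "cong_mod ghat_rels (M_left k) (fs_extend (\<lambda>w. [(1, emb_word w)]) g)
      (fs_extend (\<lambda>w. neg_emb (aff_act_word k (emb_word w) [(1,[])])) g)"
  proof (rule cong_mod_extend)
    fix c w assume "(c,w) \<in> set g"
    then have "\<forall>x\<in>set w. nminus_gen x" using assms by auto
    then show "cong_mod ghat_rels (M_left k) [(1, emb_word w)]
        (neg_emb (aff_act_word k (emb_word w) [(1,[])]))"
      by (rule M_eq_emb_word)
  qed
  moreover have e: "neg_emb (aff_rep k (emb g) [(1,[])])
    = fs_extend (\<lambda>w. neg_emb (aff_act_word k (emb_word w) [(1,[])])) g"
    by (simp only: aff_rep_emb neg_emb_extend)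
  ultimately show ?thesis unfolding M_eq_def e by (simp only: emb_eq_extend[of g])
qed

lemma neg_emb_neg_words: "\<forall>(c, w)\<in>set (neg_emb p). neg_word w"
  by (auto simp: neg_emb_def neg_word_of_def neg_word_def)

lemma to_Ug_M_eq:
  "M_eq k v w \<Longrightarrow> cong_mod Ug_rels {} (to_Ug (aff_rep k v [(1,[])])) (to_Ug (aff_rep k w [(1,[])]))"
  unfolding M_eq_def
  by (erule cong_mod_linear_image[OF _ fs_linear_comp[OF fs_linear_to_Ug fs_linear_aff_rep_left]])
    (intro to_Ug_vac_ideal aff_rep_M_ideal)

lemma ug_transpose_Ug_eq:
  "Ug_eq u v \<Longrightarrow> cong_mod Ug_rels {} (ug_transpose u) (ug_transpose v)"
  unfolding Ug_eq_def
  by (erule cong_mod_linear_image[OF _ fs_linear_ug_transpose ug_transpose_Ug_ideal])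

lemma F_of_class_to_Ug:
  assumes "F_of_class k v u"
  shows "cong_mod Ug_rels {} (to_Ug (aff_rep k v [(1,[])])) (ug_transpose u)"
proof -
  obtain p where neg: "\<forall>(c, w)\<in>set p. neg_word w" and v: "M_eq k v p" and u: "Ug_eq u (F_mono p)"
    using assms unfolding F_of_class_def by blast
  have "cong_mod Ug_rels {} (to_Ug (aff_rep k v [(1,[])])) (to_Ug (aff_rep k p [(1,[])]))"
    using v by (rule to_Ug_M_eq)
  moreover have "coef (to_Ug (aff_rep k p [(1,[])])) = coef (ug_transpose (F_mono p))"
    using neg by (rule to_Ug_neg_words)
  moreover have "cong_mod Ug_rels {} (ug_transpose (F_mono p)) (ug_transpose u)"
    using ug_transpose_Ug_eq[OF u] by (rule cong_mod_sym)
  ultimately show ?thesis by (metis cong_mod_coefI cong_mod_trans)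
qed

lemma F_of_class_emb_exists:
  assumes "\<forall>(c, w)\<in>set g. \<forall>x\<in>set w. nminus_gen x"
  shows "\<exists>u. F_of_class k (emb g) u"
  unfolding F_of_class_def Ug_eq_def
  using M_eq_emb[OF assms] neg_emb_neg_words cong_mod_refl by blast

theorem lemma3p2:
  fixes k :: complex and g :: "(sl2b \<times> nat) fsum" and n :: nat
  assumes "k \<noteq> -2"
    and "\<forall>(c, w)\<in>set g. \<forall>x\<in>set w. nminus_gen x"
    and "\<forall>(c, w)\<in>set g. ndeg w = n"
  shows "(\<exists>u. F_of_class k (emb g) u) \<and>
         (\<forall>u. F_of_class k (emb g) u \<longrightarrow>
              Ug_cong_nminus (eps g) (fs_smul ((-1) ^ n) (ug_transpose u)))"
proof
  show "\<exists>u. F_of_class k (emb g) u" using assms(2) by (rule F_of_class_emb_exists)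
next
  \<comment> \<open>k \<noteq> -2 is only needed for F to be an isomorphism; the congruence holds at every level
    for every u that F_of_class relates to [g.1].\<close>
  show "\<forall>u. F_of_class k (emb g) u \<longrightarrow>
      Ug_cong_nminus (eps g) (fs_smul ((-1) ^ n) (ug_transpose u))"
  proof (intro allI impI)
    fix u assume "F_of_class k (emb g) u"
    then have "cong_mod Ug_rels {fs_gen sF} (to_Ug (aff_rep k (emb g) [(1,[])])) (ug_transpose u)"
      by (rule cong_mod_mono[OF F_of_class_to_Ug])
    with cong_mod_sym[OF to_Ug_emb[OF assms(2,3)]]
    have "cong_mod Ug_rels {fs_gen sF} (fs_smul ((-1)^n) (eps g)) (ug_transpose u)"
      by (rule cong_mod_trans)
    then have "cong_mod Ug_rels {fs_gen sF}
        (fs_smul ((-1)^n) (fs_smul ((-1)^n) (eps g))) (fs_smul ((-1)^n) (ug_transpose u))"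
      by (rule cong_mod_smul)
    moreover have "coef (eps g) = coef (fs_smul ((-1)^n) (fs_smul ((-1::complex)^n) (eps g)))"
      by (simp add: fun_eq_iff mult.assoc[symmetric] flip: power_mult_distrib)
    ultimately show "Ug_cong_nminus (eps g) (fs_smul ((-1) ^ n) (ug_transpose u))"
      unfolding Ug_cong_nminus_def by (metis cong_mod_coef_subst)
  qed
qed

end
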